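(* Let $d=2$ and $f\in\mathcal{S}(\mathbb{R}^2)$ with $\mathcal{F}[f](x_0)\neq0$ for some $x_0\in\mathbb{R}^2$. Let $(\xi_x)_{x\in\mathbb{Z}^2}$ be i.i.d. a.s. finite $\mathbb{R}^2$-valued random variables, and $T_r^0=\sum_{x\in\mathbb{Z}^2} f((x+\xi_x)/r)$. Then $r\mapsto\operatorname{Var}[T_r^0]$ is bounded if and only if $\mathbb{E}[|\xi_0|^2]<\infty$.
   Context: $\mathcal{F}[f](k)=\int f(x)e^{2\pi\mathbf{i}k\cdot x}dx$; $\mathcal{S}(\mathbb{R}^2)$ is the Schwartz space. *)

theory Defs
  imports "HOL-Probability.Probability"
begin

fun iter_pderiv :: "2 list \<Rightarrow> (real^2 \<Rightarrow> real) \<Rightarrow> real^2 \<Rightarrow> real" where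
  "iter_pderiv [] f = f"
| "iter_pderiv (i # is) f = (\<lambda>x. frechet_derivative (iter_pderiv is f) (at x) (axis i 1))"

definition schwartz2 :: "(real^2 \<Rightarrow> real) \<Rightarrow> bool" where
  "schwartz2 f \<longleftrightarrow>
     (\<forall>is x. iter_pderiv is f differentiable (at x)) \<and>
     (\<forall>is (N::nat). bounded (range (\<lambda>x. (1 + norm x) ^ N * iter_pderiv is f x)))"

definition fourier2 :: "(real^2 \<Rightarrow> real) \<Rightarrow> real^2 \<Rightarrow> complex" where
  "fourier2 f k = (LINT x|lborel. complex_of_real (f x) * cis (2 * pi * (k \<bullet> x)))"

definition lat :: "int \<times> int \<Rightarrow> real^2" where
  "lat p = vector [of_int (fst p), of_int (snd p)]"

definition linstat :: "(real^2 \<Rightarrow> real) \<Rightarrow> (int \<times> int \<Rightarrow> 'a \<Rightarrow> real^2) \<Rightarrow> real \<Rightarrow> 'a \<Rightarrow> real" where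
  "linstat f \<xi> r \<omega> = (\<Sum>\<^sub>\<infinity>p\<in>UNIV. f ((1 / r) *\<^sub>R (lat p + \<xi> p \<omega>)))"

text \<open>Variance with values in [0, infinity] (for an integrable X), so that an
  infinite variance is not silently turned into 0.\<close>
definition evariance :: "'a measure \<Rightarrow> ('a \<Rightarrow> real) \<Rightarrow> ennreal" where
  "evariance M X = (\<integral>\<^sup>+ \<omega>. ennreal ((X \<omega> - integral\<^sup>L M X)\<^sup>2) \<partial>M)"

end

theory Submission
  imports Defs
begin

(* Enumerating Z^2 turns T_r^0 into an almost surely absolutely convergent series of independent,
   bounded terms, so Var T_r^0 = sum_p Var f((p + xi)/r) = 1/2 sum_p E (f((p + xi)/r) - f((p + xi')/r))^2,
   where xi, xi' are independent copies of xi_0.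

   Upper bound: Var f((p + xi)/r) <= E (f((p + xi)/r) - f(p/r))^2, and for a Schwartz function
   sum_p (f((p + y)/r) - f(p/r))^2 <= K (1 + |y|^2) uniformly in r > 0 (mean value theorem when
   |y| < r, decay of f otherwise).

   Lower bound: a nonzero Schwartz function satisfies |f(b + s) - f(b)| >= c min(|s|, 1) for all b
   in some ball of a fixed radius delta (two independent gradients for small s, compactness for
   moderate s, decay for large s).  About (delta r)^2 points of Z^2/r lie in such a ball, so
   sum_p (f((p + y)/r) - f((p + z)/r))^2 >= c' min(|y - z|^2, r^2).  A bounded variance therefore
   bounds E min(|xi - xi'|^2, r^2) uniformly in r, so E |xi - xi'|^2 < oo by monotone convergence,
   and E |xi|^2 < oo by Fubini. *)

lemma norm_le_abs_components2: "norm (x::real^2) \<le> \<bar>x$1\<bar> + \<bar>x$2\<bar>"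
  using norm_le_l1_cart[of x] by (simp add: UNIV_2)

lemma power2_le_of_abs_le:
  fixes u b :: real
  assumes "\<bar>u\<bar> \<le> b"
  shows "u\<^sup>2 \<le> b\<^sup>2"
  using assms abs_le_square_iff[of u b] by (simp add: abs_of_nonneg order_trans[OF abs_ge_zero assms])

lemma onorm_linear2_le: "onorm (\<lambda>h::real^2. h$1 * a + h$2 * b) \<le> \<bar>a\<bar> + \<bar>b\<bar>"
proof (rule onorm_le)
  fix h :: "real^2"
  have "norm (h$1 * a + h$2 * b) \<le> \<bar>h$1\<bar> * \<bar>a\<bar> + \<bar>h$2\<bar> * \<bar>b\<bar>"
    by (simp add: abs_mult[symmetric])
  also have "\<dots> \<le> norm h * \<bar>a\<bar> + norm h * \<bar>b\<bar>"
    by (intro add_mono mult_right_mono component_le_norm_cart) auto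
  finally show "norm (h$1 * a + h$2 * b) \<le> (\<bar>a\<bar> + \<bar>b\<bar>) * norm h"
    by (simp add: algebra_simps)
qed

lemma det2_lower_bound:
  fixes u1 u2 v1 v2 :: real
  assumes det: "u1 * v2 - u2 * v1 \<noteq> 0"
  shows "\<exists>c>0. \<forall>s1 s2. c * (\<bar>s1\<bar> + \<bar>s2\<bar>) \<le> max \<bar>s1 * u1 + s2 * u2\<bar> \<bar>s1 * v1 + s2 * v2\<bar>"
proof -
  define d where "d = u1 * v2 - u2 * v1"
  define N where "N = \<bar>u1\<bar> + \<bar>u2\<bar> + \<bar>v1\<bar> + \<bar>v2\<bar>"
  have N: "N > 0"
    using det unfolding N_def by (cases "u1 = 0"; cases "u2 = 0") auto
  have "\<bar>d\<bar> / N * (\<bar>s1\<bar> + \<bar>s2\<bar>) \<le> max \<bar>s1 * u1 + s2 * u2\<bar> \<bar>s1 * v1 + s2 * v2\<bar>" for s1 s2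
  proof -
    define A where "A = s1 * u1 + s2 * u2"
    define B where "B = s1 * v1 + s2 * v2"
    \<comment> \<open>Cramer's rule recovers \<open>s\<close> from \<open>A\<close> and \<open>B\<close>.\<close>
    have "d * s1 = A * v2 - B * u2" "d * s2 = B * u1 - A * v1"
      by (simp_all add: A_def B_def d_def algebra_simps)
    then have "\<bar>d\<bar> * (\<bar>s1\<bar> + \<bar>s2\<bar>) = \<bar>A * v2 - B * u2\<bar> + \<bar>B * u1 - A * v1\<bar>"
      by (simp add: distrib_left abs_mult[symmetric])
    also have "\<dots> \<le> \<bar>A\<bar> * \<bar>v2\<bar> + \<bar>B\<bar> * \<bar>u2\<bar> + \<bar>B\<bar> * \<bar>u1\<bar> + \<bar>A\<bar> * \<bar>v1\<bar>"
      using abs_triangle_ineq4[of "A * v2" "B * u2"] abs_triangle_ineq4[of "B * u1" "A * v1"]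
      by (simp add: abs_mult)
    also have "\<dots> \<le> max \<bar>A\<bar> \<bar>B\<bar> * N"
    proof -
      have "\<bar>A\<bar> * \<bar>v2\<bar> \<le> max \<bar>A\<bar> \<bar>B\<bar> * \<bar>v2\<bar>" "\<bar>A\<bar> * \<bar>v1\<bar> \<le> max \<bar>A\<bar> \<bar>B\<bar> * \<bar>v1\<bar>"
           "\<bar>B\<bar> * \<bar>u2\<bar> \<le> max \<bar>A\<bar> \<bar>B\<bar> * \<bar>u2\<bar>" "\<bar>B\<bar> * \<bar>u1\<bar> \<le> max \<bar>A\<bar> \<bar>B\<bar> * \<bar>u1\<bar>"
        by (auto intro: mult_right_mono)
      then show ?thesis unfolding N_def by (simp add: algebra_simps)
    qed
    finally show ?thesis
      using N by (simp add: A_def B_def field_simps)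
  qed
  moreover have "\<bar>d\<bar> / N > 0"
    using det N by (simp add: d_def)
  ultimately show ?thesis by blast
qed

section \<open>Schwartz functions on the plane\<close>

definition partial_deriv :: "(real^2 \<Rightarrow> real) \<Rightarrow> 2 \<Rightarrow> real^2 \<Rightarrow> real" where
  "partial_deriv f i x = frechet_derivative f (at x) (axis i 1)"

definition dir_deriv :: "(real^2 \<Rightarrow> real) \<Rightarrow> real^2 \<Rightarrow> real^2 \<Rightarrow> real" where
  "dir_deriv f x h = h$1 * partial_deriv f 1 x + h$2 * partial_deriv f 2 x"

lemma iter_pderiv_single: "iter_pderiv [i] f = partial_deriv f i"
  by (simp add: partial_deriv_def fun_eq_iff)

lemma dir_deriv_scaleR: "dir_deriv f x (t *\<^sub>R h) = t * dir_deriv f x h"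
  by (simp add: dir_deriv_def algebra_simps)

locale schwartz2_function =
  fixes f :: "real^2 \<Rightarrow> real"
  assumes schwartz: "schwartz2 f"
begin

lemma f_differentiable: "f differentiable (at x)"
  using schwartz unfolding schwartz2_def by (metis iter_pderiv.simps(1))

lemma f_has_derivative: "(f has_derivative dir_deriv f x) (at x)"
proof -
  have deriv: "(f has_derivative frechet_derivative f (at x)) (at x)"
    using f_differentiable frechet_derivative_works by blast
  interpret linear: bounded_linear "frechet_derivative f (at x)"
    using deriv has_derivative_bounded_linear by blast
  have "frechet_derivative f (at x) h = dir_deriv f x h" for h
  proof -
    have "frechet_derivative f (at x) h
        = frechet_derivative f (at x) (h$1 *\<^sub>R axis 1 1 + h$2 *\<^sub>R axis 2 1)"
      by (rule arg_cong[where f = "frechet_derivative f (at x)"]) (auto simp: vec_eq_iff axis_def forall_2)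
    also have "\<dots> = dir_deriv f x h"
      by (simp add: linear.add linear.scaleR dir_deriv_def partial_deriv_def)
    finally show ?thesis .
  qed
  then have "frechet_derivative f (at x) = dir_deriv f x" ..
  with deriv show ?thesis by simp
qed

lemma f_continuous: "isCont f x"
  using f_differentiable differentiable_imp_continuous_within by blast

lemma partial_deriv_continuous: "isCont (partial_deriv f i) x"
proof -
  have "partial_deriv f i differentiable (at x)"
    using schwartz unfolding schwartz2_def by (metis iter_pderiv_single)
  then show ?thesis by (simp add: differentiable_imp_continuous_within)
qed

lemma iter_pderiv_decay: "\<exists>C. \<forall>x. \<bar>iter_pderiv is f x\<bar> * (1 + norm x) ^ 4 \<le> C"
proof -
  have "bounded (range (\<lambda>x. (1 + norm x) ^ 4 * iter_pderiv is f x))"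
    using schwartz unfolding schwartz2_def by blast
  then obtain C where "\<forall>x. norm ((1 + norm x) ^ 4 * iter_pderiv is f x) \<le> C"
    by (auto simp: bounded_iff)
  then show ?thesis
    by (intro exI[of _ C]) (auto simp: abs_mult mult.commute)
qed

lemma f_decay: "\<exists>C. \<forall>x. \<bar>f x\<bar> * (1 + norm x) ^ 4 \<le> C"
  using iter_pderiv_decay[of "[]"] by simp

lemma partial_deriv_decay: "\<exists>C. \<forall>i x. \<bar>partial_deriv f i x\<bar> * (1 + norm x) ^ 4 \<le> C"
proof -
  obtain C where C: "\<And>i x. \<bar>partial_deriv f i x\<bar> * (1 + norm x) ^ 4 \<le> C i"
    using iter_pderiv_decay[of "[_]"] unfolding iter_pderiv_single by metis
  have nonneg: "0 \<le> C i" for i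
    using C[of i 0] by (meson abs_ge_zero mult_nonneg_nonneg order_trans zero_le_power norm_ge_zero add_nonneg_nonneg zero_le_one)
  have "\<bar>partial_deriv f i x\<bar> * (1 + norm x) ^ 4 \<le> C 1 + C 2" for i x
    using C[of i x] nonneg[of 1] nonneg[of 2] exhaust_2[of i] by auto
  then show ?thesis by blast
qed

lemma f_bounded: "\<exists>B. \<forall>x. \<bar>f x\<bar> \<le> B"
proof -
  obtain C where C: "\<And>x. \<bar>f x\<bar> * (1 + norm x) ^ 4 \<le> C"
    using f_decay by blast
  have "\<bar>f x\<bar> \<le> \<bar>f x\<bar> * (1 + norm x) ^ 4" for x
    by (intro mult_le_cancel_left1[THEN iffD2] impI one_le_power) auto
  with C show ?thesis
    by (meson order_trans)
qed

lemma f_vanishes_at_infinity: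
  assumes "\<epsilon> > 0"
  shows "\<exists>R. \<forall>x. R \<le> norm x \<longrightarrow> \<bar>f x\<bar> < \<epsilon>"
proof -
  obtain C where C: "\<And>x. \<bar>f x\<bar> * (1 + norm x) ^ 4 \<le> C"
    using f_decay by blast
  have "\<bar>f x\<bar> < \<epsilon>" if "C / \<epsilon> \<le> norm x" for x
  proof (rule ccontr)
    assume "\<not> \<bar>f x\<bar> < \<epsilon>"
    then have "\<epsilon> * (1 + norm x) \<le> \<bar>f x\<bar> * (1 + norm x) ^ 4"
      by (intro mult_mono self_le_power) auto
    then have "\<epsilon> * (1 + norm x) \<le> C"
      using C[of x] by linarith
    with that assms show False
      by (simp add: field_simps)
  qed
  then show ?thesis by blast
qed

lemma partial_derivs_near:
  assumes "\<eta> > 0"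
  shows "\<exists>\<epsilon>>0. \<forall>x\<in>ball a \<epsilon>. \<forall>i. \<bar>partial_deriv f i x - partial_deriv f i a\<bar> \<le> \<eta>"
proof -
  obtain \<epsilon>1 where \<epsilon>1: "\<epsilon>1 > 0" "\<And>x. dist x a < \<epsilon>1 \<Longrightarrow> dist (partial_deriv f 1 x) (partial_deriv f 1 a) < \<eta>"
    using partial_deriv_continuous[of a 1, unfolded continuous_at_eps_delta, rule_format, OF assms] by blast
  obtain \<epsilon>2 where \<epsilon>2: "\<epsilon>2 > 0" "\<And>x. dist x a < \<epsilon>2 \<Longrightarrow> dist (partial_deriv f 2 x) (partial_deriv f 2 a) < \<eta>"
    using partial_deriv_continuous[of a 2, unfolded continuous_at_eps_delta, rule_format, OF assms] by blast
  have "\<bar>partial_deriv f i x - partial_deriv f i a\<bar> \<le> \<eta>" if "x \<in> ball a (min \<epsilon>1 \<epsilon>2)" for x i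
  proof -
    have "dist x a < \<epsilon>1" "dist x a < \<epsilon>2"
      using that by (auto simp: dist_commute)
    then show ?thesis
      using \<epsilon>1(2)[of x] \<epsilon>2(2)[of x] exhaust_2[of i] by (auto simp: dist_real_def)
  qed
  moreover have "min \<epsilon>1 \<epsilon>2 > 0"
    using \<epsilon>1 \<epsilon>2 by simp
  ultimately show ?thesis by blast
qed

lemma shift_linearization:
  assumes "convex S" "a \<in> S" "b \<in> S" "b + s \<in> S"
    and near: "\<And>x i. x \<in> S \<Longrightarrow> \<bar>partial_deriv f i x - partial_deriv f i a\<bar> \<le> \<eta>"
  shows "\<bar>f (b + s) - f b - dir_deriv f a s\<bar> \<le> 2 * \<eta> * norm s"
proof -
  have "norm (f (b + s) - f b - dir_deriv f a (b + s - b)) \<le> norm (b + s - b) * (2 * \<eta>)"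
  proof (rule differentiable_bound_linearization[where S = S])
    show "b + t *\<^sub>R (b + s - b) \<in> S" if "t \<in> {0..1}" for t
      using convexD_alt[OF \<open>convex S\<close> \<open>b \<in> S\<close> \<open>b + s \<in> S\<close>, of t] that
      by (simp add: algebra_simps)
    show "(f has_derivative dir_deriv f x) (at x within S)" for x
      using f_has_derivative by (rule has_derivative_at_withinI)
    show "onorm (dir_deriv f x - dir_deriv f a) \<le> 2 * \<eta>" if "x \<in> S" for x
    proof -
      have "dir_deriv f x - dir_deriv f a = (\<lambda>h. h$1 * (partial_deriv f 1 x - partial_deriv f 1 a)
          + h$2 * (partial_deriv f 2 x - partial_deriv f 2 a))"
        by (auto simp: dir_deriv_def fun_eq_iff algebra_simps)
      then have "onorm (dir_deriv f x - dir_deriv f a)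
          \<le> \<bar>partial_deriv f 1 x - partial_deriv f 1 a\<bar> + \<bar>partial_deriv f 2 x - partial_deriv f 2 a\<bar>"
        by (simp add: onorm_linear2_le)
      with near[OF that, of 1] near[OF that, of 2] show ?thesis
        by linarith
    qed
  qed fact
  then show ?thesis by (simp add: mult.commute)
qed

lemma shift_bound:
  assumes "convex S" "b \<in> S" "b + s \<in> S"
    and bound: "\<And>x i. x \<in> S \<Longrightarrow> \<bar>partial_deriv f i x\<bar> \<le> K"
  shows "\<bar>f (b + s) - f b\<bar> \<le> 2 * K * norm s"
proof -
  have "norm (f (b + s) - f b) \<le> 2 * K * norm (b + s - b)"
  proof (rule differentiable_bound[where S = S])
    show "(f has_derivative dir_deriv f x) (at x within S)" for x
      using f_has_derivative by (rule has_derivative_at_withinI)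
    show "onorm (dir_deriv f x) \<le> 2 * K" if "x \<in> S" for x
      using onorm_linear2_le[of "partial_deriv f 1 x" "partial_deriv f 2 x"]
        bound[OF that, of 1] bound[OF that, of 2]
      by (simp add: dir_deriv_def[abs_def] mult.commute)
  qed fact+
  then show ?thesis by simp
qed

end

section \<open>Shifts of a nonzero Schwartz function\<close>

locale nonzero_schwartz2 = schwartz2_function +
  assumes nonzero: "\<exists>a. f a \<noteq> 0"
begin

lemma shift_ne:
  assumes "s \<noteq> 0"
  shows "\<exists>b. f (b + s) \<noteq> f b"
proof (rule ccontr)
  assume "\<nexists>b. f (b + s) \<noteq> f b"
  then have shift: "f (b + s) = f b" for b by blast
  have periodic: "f (a + real n *\<^sub>R s) = f a" for a n
  proof (induction n)
    case (Suc n)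
    have "f (a + real (Suc n) *\<^sub>R s) = f ((a + real n *\<^sub>R s) + s)"
      by (simp add: algebra_simps)
    then show ?case
      using Suc.IH shift[of "a + real n *\<^sub>R s"] by simp
  qed simp
  obtain a where a: "f a \<noteq> 0"
    using nonzero by blast
  then obtain R where R: "\<And>x. R \<le> norm x \<Longrightarrow> \<bar>f x\<bar> < \<bar>f a\<bar>"
    using f_vanishes_at_infinity[of "\<bar>f a\<bar>"] by auto
  obtain n :: nat where "(R + norm a) / norm s \<le> n"
    using real_arch_simple by blast
  then have "R + norm a \<le> norm (real n *\<^sub>R s)"
    using assms by (simp add: field_simps)
  also have "norm (real n *\<^sub>R s) = norm ((a + real n *\<^sub>R s) - a)"
    by simp
  also have "\<dots> \<le> norm (a + real n *\<^sub>R s) + norm a"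
    by (rule norm_triangle_ineq4)
  finally have "\<bar>f (a + real n *\<^sub>R s)\<bar> < \<bar>f a\<bar>"
    using R by simp
  then show False
    by (simp add: periodic)
qed

lemma dir_deriv_ne:
  assumes "w \<noteq> 0"
  shows "\<exists>b. dir_deriv f b w \<noteq> 0"
proof (rule ccontr)
  assume "\<nexists>b. dir_deriv f b w \<noteq> 0"
  then have flat: "dir_deriv f b w = 0" for b by blast
  have "f (b + w) = f b" for b
  proof -
    have "((\<lambda>t. f (b + t *\<^sub>R w)) has_derivative (\<lambda>h. dir_deriv f (b + t *\<^sub>R w) (h *\<^sub>R w))) (at t within UNIV)"
      for t :: real
      by (rule has_derivative_compose[OF _ f_has_derivative]) (auto intro!: derivative_eq_intros)
    then have "((\<lambda>t. f (b + t *\<^sub>R w)) has_derivative (\<lambda>h. 0)) (at t within UNIV)" for t :: real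
      by (simp add: dir_deriv_scaleR flat)
    then obtain c where "\<And>t. f (b + t *\<^sub>R w) = c"
      using has_derivative_zero_constant[of UNIV "\<lambda>t. f (b + t *\<^sub>R w)"] by auto
    from this[of 1] this[of 0] show ?thesis by simp
  qed
  with shift_ne[OF assms] show False by blast
qed

lemma gradient_lower_bound:
  "\<exists>c>0. \<exists>B. finite B \<and> (\<forall>s. \<exists>b\<in>B. c * norm s \<le> \<bar>dir_deriv f b s\<bar>)"
proof -
  have "(axis 1 1 :: real^2) \<noteq> 0"
    by (simp add: axis_eq_0_iff)
  from dir_deriv_ne[OF this] obtain b1 where b1: "partial_deriv f 1 b1 \<noteq> 0"
    by (auto simp: dir_deriv_def axis_def)
  \<comment> \<open>\<open>?w\<close> is orthogonal to the gradient at \<open>b1\<close>, so the gradients at \<open>b1\<close> and \<open>b2\<close> are independent\<close>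
  let ?w = "vector [- partial_deriv f 2 b1, partial_deriv f 1 b1] :: real^2"
  have "?w \<noteq> 0"
    using b1 by (auto simp: vec_eq_iff forall_2)
  from dir_deriv_ne[OF this] obtain b2 where
    "partial_deriv f 1 b1 * partial_deriv f 2 b2 - partial_deriv f 2 b1 * partial_deriv f 1 b2 \<noteq> 0"
    by (auto simp: dir_deriv_def algebra_simps)
  from det2_lower_bound[OF this] obtain c where c: "c > 0" and
    lower: "\<And>s1 s2. c * (\<bar>s1\<bar> + \<bar>s2\<bar>) \<le> max \<bar>s1 * partial_deriv f 1 b1 + s2 * partial_deriv f 2 b1\<bar>
      \<bar>s1 * partial_deriv f 1 b2 + s2 * partial_deriv f 2 b2\<bar>"
    by blast
  have "\<exists>b\<in>{b1, b2}. c * norm s \<le> \<bar>dir_deriv f b s\<bar>" for s :: "real^2"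
  proof -
    have "c * norm s \<le> c * (\<bar>s$1\<bar> + \<bar>s$2\<bar>)"
      using norm_le_abs_components2[of s] c by simp
    also have "\<dots> \<le> max \<bar>dir_deriv f b1 s\<bar> \<bar>dir_deriv f b2 s\<bar>"
      using lower[of "s$1" "s$2"] by (simp add: dir_deriv_def)
    finally show ?thesis
      by (auto simp: max_def split: if_splits)
  qed
  moreover have "finite {b1, b2}"
    by simp
  ultimately show ?thesis
    using c by blast
qed

lemma shift_lower_bound_small:
  "\<exists>c>0. \<exists>\<rho>>0. \<forall>s. norm s < \<rho> \<longrightarrow> (\<exists>a. \<forall>b\<in>ball a \<rho>. c * norm s \<le> \<bar>f (b + s) - f b\<bar>)"
proof -
  obtain c B where c: "c > 0" and B: "finite B"
    and grad: "\<And>s. \<exists>a\<in>B. c * norm s \<le> \<bar>dir_deriv f a s\<bar>"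
    using gradient_lower_bound by blast
  have "\<forall>a\<in>B. \<exists>\<epsilon>>0. \<forall>x\<in>ball a \<epsilon>. \<forall>i. \<bar>partial_deriv f i x - partial_deriv f i a\<bar> \<le> c / 4"
    using partial_derivs_near[of "c / 4"] c by simp
  then obtain \<epsilon> where \<epsilon>: "\<And>a. a \<in> B \<Longrightarrow> \<epsilon> a > 0"
    and near: "\<And>a x i. a \<in> B \<Longrightarrow> x \<in> ball a (\<epsilon> a) \<Longrightarrow>
      \<bar>partial_deriv f i x - partial_deriv f i a\<bar> \<le> c / 4"
    by metis
  define \<rho> where "\<rho> = Min (insert 1 (\<epsilon> ` B)) / 2"
  have \<rho>: "\<rho> > 0" "\<And>a. a \<in> B \<Longrightarrow> 2 * \<rho> \<le> \<epsilon> a"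
    using B \<epsilon> by (auto simp: \<rho>_def)
  have "\<exists>a. \<forall>b\<in>ball a \<rho>. c / 2 * norm s \<le> \<bar>f (b + s) - f b\<bar>" if s: "norm s < \<rho>" for s
  proof -
    obtain a where a: "a \<in> B" "c * norm s \<le> \<bar>dir_deriv f a s\<bar>"
      using grad by blast
    have "c / 2 * norm s \<le> \<bar>f (b + s) - f b\<bar>" if b: "b \<in> ball a \<rho>" for b
    proof -
      have "dist a (b + s) \<le> dist a b + dist b (b + s)"
        by (rule dist_triangle)
      then have "b + s \<in> ball a (2 * \<rho>)"
        using b s by (simp add: dist_norm)
      moreover have "ball a (2 * \<rho>) \<subseteq> ball a (\<epsilon> a)"
        using \<rho>(2)[OF a(1)] by auto
      ultimately have "\<bar>f (b + s) - f b - dir_deriv f a s\<bar> \<le> 2 * (c / 4) * norm s"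
        using b \<rho>(1) near[OF a(1)]
        by (intro shift_linearization[where S = "ball a (2 * \<rho>)"]) auto
      with a(2) show ?thesis by linarith
    qed
    then show ?thesis by blast
  qed
  moreover have "c / 2 > 0"
    using c by simp
  ultimately show ?thesis
    using \<rho>(1) by blast
qed

lemma shift_lower_bound_large:
  "\<exists>\<kappa>>0. \<exists>\<delta>>0. \<exists>a L. \<forall>s. L \<le> norm s \<longrightarrow> (\<forall>b\<in>ball a \<delta>. \<kappa> \<le> \<bar>f (b + s) - f b\<bar>)"
proof -
  obtain a where a: "f a \<noteq> 0"
    using nonzero by blast
  then have "\<bar>f a\<bar> / 2 > 0" by simp
  then obtain \<delta> where \<delta>: "\<delta> > 0" "\<And>b. dist b a < \<delta> \<Longrightarrow> \<bar>f b - f a\<bar> < \<bar>f a\<bar> / 2"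
    using f_continuous[of a] unfolding continuous_at_eps_delta dist_real_def by blast
  obtain R where R: "\<And>x. R \<le> norm x \<Longrightarrow> \<bar>f x\<bar> < \<bar>f a\<bar> / 4"
    using f_vanishes_at_infinity[of "\<bar>f a\<bar> / 4"] a by auto
  have "\<bar>f a\<bar> / 4 \<le> \<bar>f (b + s) - f b\<bar>" if s: "R + norm a + \<delta> \<le> norm s" and b: "b \<in> ball a \<delta>" for s b
  proof -
    have "dist b a < \<delta>"
      using b by (simp add: dist_commute)
    moreover have "norm b \<le> norm a + dist b a"
      using norm_triangle_sub[of b a] by (simp add: dist_norm)
    moreover have "norm s \<le> norm (b + s) + norm b"
      using norm_triangle_sub[of s "b + s"] by simp
    ultimately have "R \<le> norm (b + s)"
      using s by linarith
    then have "\<bar>f (b + s)\<bar> < \<bar>f a\<bar> / 4"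
      by (rule R)
    moreover have "\<bar>f b - f a\<bar> < \<bar>f a\<bar> / 2"
      by (rule \<delta>(2)) fact
    ultimately show ?thesis by linarith
  qed
  moreover have "\<bar>f a\<bar> / 4 > 0"
    using a by simp
  ultimately show ?thesis
    using \<delta>(1) by blast
qed

lemma shift_lower_bound_local:
  assumes "s0 \<noteq> 0"
  shows "\<exists>a \<kappa> \<tau>. \<kappa> > 0 \<and> \<tau> > 0 \<and> (\<forall>s\<in>ball s0 \<tau>. \<forall>b\<in>ball a \<tau>. \<kappa> \<le> \<bar>f (b + s) - f b\<bar>)"
proof -
  obtain a where "f (a + s0) \<noteq> f a"
    using shift_ne[OF assms] by blast
  then have \<Delta>: "\<bar>f (a + s0) - f a\<bar> / 4 > 0" by simp
  obtain t1 where t1: "t1 > 0" "\<And>w. dist w (a + s0) < t1 \<Longrightarrow> \<bar>f w - f (a + s0)\<bar> < \<bar>f (a + s0) - f a\<bar> / 4"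
    using f_continuous[of "a + s0"] \<Delta> unfolding continuous_at_eps_delta dist_real_def by blast
  obtain t2 where t2: "t2 > 0" "\<And>w. dist w a < t2 \<Longrightarrow> \<bar>f w - f a\<bar> < \<bar>f (a + s0) - f a\<bar> / 4"
    using f_continuous[of a] \<Delta> unfolding continuous_at_eps_delta dist_real_def by blast
  define \<tau> where "\<tau> = min t1 t2 / 2"
  have "\<bar>f (a + s0) - f a\<bar> / 2 \<le> \<bar>f (b + s) - f b\<bar>" if "s \<in> ball s0 \<tau>" "b \<in> ball a \<tau>" for s b
  proof -
    have "dist b a < t1 / 2" "dist s s0 < t1 / 2" "dist b a < t2"
      using that t2(1) by (auto simp: \<tau>_def dist_commute)
    then have "\<bar>f (b + s) - f (a + s0)\<bar> < \<bar>f (a + s0) - f a\<bar> / 4"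
      by (intro t1(2) dist_triangle_add_half)
    moreover have "\<bar>f b - f a\<bar> < \<bar>f (a + s0) - f a\<bar> / 4"
      by (rule t2(2)) fact
    moreover have "\<bar>f (a + s0) - f a\<bar> \<le> \<bar>f (b + s) - f (a + s0)\<bar> + \<bar>f (b + s) - f b\<bar> + \<bar>f b - f a\<bar>"
      by linarith
    ultimately show ?thesis by linarith
  qed
  moreover have "\<bar>f (a + s0) - f a\<bar> / 2 > 0" "\<tau> > 0"
    using \<Delta> t1 t2 by (auto simp: \<tau>_def)
  ultimately show ?thesis by blast
qed

lemma shift_lower_bound_compact:
  assumes "compact K" "0 \<notin> K"
  shows "\<exists>\<kappa>>0. \<exists>\<tau>>0. \<forall>s\<in>K. \<exists>a. \<forall>b\<in>ball a \<tau>. \<kappa> \<le> \<bar>f (b + s) - f b\<bar>"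
proof -
  have "\<forall>s0\<in>K. \<exists>a \<kappa> \<tau>. \<kappa> > 0 \<and> \<tau> > 0 \<and> (\<forall>s\<in>ball s0 \<tau>. \<forall>b\<in>ball a \<tau>. \<kappa> \<le> \<bar>f (b + s) - f b\<bar>)"
    using shift_lower_bound_local assms(2) by metis
  then obtain ctr lb rad where local: "\<And>s0. s0 \<in> K \<Longrightarrow> lb s0 > 0 \<and> rad s0 > 0 \<and>
      (\<forall>s\<in>ball s0 (rad s0). \<forall>b\<in>ball (ctr s0) (rad s0). lb s0 \<le> \<bar>f (b + s) - f b\<bar>)"
    by metis
  have "K \<subseteq> (\<Union>s0\<in>K. ball s0 (rad s0))"
    using local by force
  then obtain F where F: "F \<subseteq> K" "finite F" "K \<subseteq> (\<Union>s0\<in>F. ball s0 (rad s0))"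
    using compactE_image[OF assms(1), of K "\<lambda>s0. ball s0 (rad s0)"] by blast
  define \<kappa> where "\<kappa> = Min (insert 1 (lb ` F))"
  define \<tau> where "\<tau> = Min (insert 1 (rad ` F))"
  have "\<exists>a. \<forall>b\<in>ball a \<tau>. \<kappa> \<le> \<bar>f (b + s) - f b\<bar>" if "s \<in> K" for s
  proof -
    obtain s0 where s0: "s0 \<in> F" "s \<in> ball s0 (rad s0)"
      using F \<open>s \<in> K\<close> by blast
    then have "\<kappa> \<le> lb s0" "\<tau> \<le> rad s0" "s0 \<in> K"
      using F by (auto simp: \<kappa>_def \<tau>_def)
    then show ?thesis
      using local[of s0] s0(2) by (meson mem_ball order_trans less_le_trans)
  qed
  moreover have "\<kappa> > 0" "\<tau> > 0"
    using F local by (auto simp: \<kappa>_def \<tau>_def)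
  ultimately show ?thesis by blast
qed

lemma shift_lower_bound:
  "\<exists>c>0. \<exists>\<delta>>0. \<forall>s. \<exists>a. \<forall>b\<in>ball a \<delta>. c * min (norm s) 1 \<le> \<bar>f (b + s) - f b\<bar>"
proof -
  obtain c0 \<rho> where c0: "c0 > 0" "\<rho> > 0"
    and small: "\<And>s. norm s < \<rho> \<Longrightarrow> \<exists>a. \<forall>b\<in>ball a \<rho>. c0 * norm s \<le> \<bar>f (b + s) - f b\<bar>"
    using shift_lower_bound_small by blast
  obtain \<kappa>1 \<delta>1 a1 L where \<kappa>1: "\<kappa>1 > 0" "\<delta>1 > 0"
    and large: "\<And>s. L \<le> norm s \<Longrightarrow> \<forall>b\<in>ball a1 \<delta>1. \<kappa>1 \<le> \<bar>f (b + s) - f b\<bar>"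
    using shift_lower_bound_large by blast
  have K: "compact (cball (0::real^2) L - ball 0 \<rho>)" "0 \<notin> cball (0::real^2) L - ball 0 \<rho>"
    using c0 by (auto intro!: compact_diff compact_cball)
  obtain \<kappa>2 \<tau> where \<kappa>2: "\<kappa>2 > 0" "\<tau> > 0"
    and mid: "\<And>s. s \<in> cball 0 L - ball 0 \<rho> \<Longrightarrow> \<exists>a. \<forall>b\<in>ball a \<tau>. \<kappa>2 \<le> \<bar>f (b + s) - f b\<bar>"
    using shift_lower_bound_compact[OF K] by blast
  define c where "c = min c0 (min \<kappa>1 \<kappa>2)"
  define \<delta> where "\<delta> = min \<rho> (min \<delta>1 \<tau>)"
  have weaken: "\<exists>a. \<forall>b\<in>ball a \<delta>. c * min (norm s) 1 \<le> \<bar>f (b + s) - f b\<bar>"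
    if "\<forall>b\<in>ball a r. t \<le> \<bar>f (b + s) - f b\<bar>" "\<delta> \<le> r" "c * min (norm s) 1 \<le> t" for a r t s
    using that by (intro exI[of _ a]) (auto intro: order_trans)
  have "\<exists>a. \<forall>b\<in>ball a \<delta>. c * min (norm s) 1 \<le> \<bar>f (b + s) - f b\<bar>" for s
  proof -
    have "0 \<le> c" "c \<le> c0"
      using c0 \<kappa>1 \<kappa>2 by (auto simp: c_def)
    then have "c * min (norm s) 1 \<le> c0 * norm s" "c * min (norm s) 1 \<le> c"
      using mult_left_mono[of "min (norm s) 1" 1 c] by (auto intro: mult_mono)
    then have le: "c * min (norm s) 1 \<le> c0 * norm s" "c * min (norm s) 1 \<le> \<kappa>1" "c * min (norm s) 1 \<le> \<kappa>2"
      by (auto simp: c_def)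
    consider "norm s < \<rho>" | "L \<le> norm s" | "s \<in> cball 0 L - ball 0 \<rho>"
      by (simp add: not_less) (meson linorder_not_le less_imp_le)
    then show ?thesis
    proof cases
      case 1
      with small weaken le(1) show ?thesis by (fastforce simp: \<delta>_def)
    next
      case 2
      with large weaken le(2) show ?thesis by (fastforce simp: \<delta>_def)
    next
      case 3
      with mid weaken le(3) show ?thesis by (fastforce simp: \<delta>_def)
    qed
  qed
  moreover have "c > 0" "\<delta> > 0"
    using c0 \<kappa>1 \<kappa>2 by (auto simp: c_def \<delta>_def)
  ultimately show ?thesis by blast
qed

end

section \<open>Lattice sums\<close>

lemma lat_nth [simp]: "lat p $ 1 = of_int (fst p)" "lat p $ 2 = of_int (snd p)"
  by (simp_all add: lat_def vector_2)

lemma int_points_near: "\<exists>I::int set. finite I \<and> 2 * h - 1 \<le> real (card I) \<and> (\<forall>m\<in>I. \<bar>of_int m - x\<bar> \<le> h)"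
proof -
  define I where "I = {\<lceil>x - h\<rceil> .. \<lfloor>x + h\<rfloor>}"
  have "2 * h - 1 \<le> of_int (\<lfloor>x + h\<rfloor> - \<lceil>x - h\<rceil> + 1)"
    by linarith
  also have "\<dots> \<le> real (card I)"
    by (simp add: I_def)
  finally have "2 * h - 1 \<le> real (card I)" .
  moreover have "\<bar>of_int m - x\<bar> \<le> h" if "m \<in> I" for m
    using that unfolding I_def by (simp add: abs_le_iff) linarith
  ultimately show ?thesis
    by (intro exI[of _ I]) (simp add: I_def)
qed

lemma scaled_lattice_points_in_ball:
  assumes r: "r > 0" and d: "d > 0" and rd: "3 \<le> r * d"
  shows "\<exists>P. finite P \<and> (r * d / 3)\<^sup>2 \<le> real (card P) \<and> (\<forall>p\<in>P. (1 / r) *\<^sub>R (lat p + z) \<in> ball a d)"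
proof -
  obtain I1 where I1: "finite I1" "2 * (r * d / 3) - 1 \<le> real (card I1)"
    "\<And>m. m \<in> I1 \<Longrightarrow> \<bar>of_int m - (r * a$1 - z$1)\<bar> \<le> r * d / 3"
    using int_points_near[of "r * d / 3" "r * a$1 - z$1"] by blast
  obtain I2 where I2: "finite I2" "2 * (r * d / 3) - 1 \<le> real (card I2)"
    "\<And>m. m \<in> I2 \<Longrightarrow> \<bar>of_int m - (r * a$2 - z$2)\<bar> \<le> r * d / 3"
    using int_points_near[of "r * d / 3" "r * a$2 - z$2"] by blast
  have "(r * d / 3)\<^sup>2 \<le> real (card I1) * real (card I2)"
    unfolding power2_eq_square using I1(2) I2(2) rd by (intro mult_mono) auto
  then have card: "(r * d / 3)\<^sup>2 \<le> real (card (I1 \<times> I2))"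
    by (simp add: card_cartesian_product)
  have scaled: "\<bar>(u + v) / r - b\<bar> \<le> d / 3" if "\<bar>u - (r * b - v)\<bar> \<le> r * d / 3" for u v b
  proof -
    have "(u + v) / r - b = (u - (r * b - v)) / r"
      using r by (simp add: field_simps)
    then have "\<bar>(u + v) / r - b\<bar> = \<bar>u - (r * b - v)\<bar> / r"
      using r by simp
    also have "\<dots> \<le> d / 3"
      using that r by (simp add: field_simps)
    finally show ?thesis .
  qed
  have "(1 / r) *\<^sub>R (lat p + z) \<in> ball a d" if "p \<in> I1 \<times> I2" for p
  proof -
    let ?x = "(1 / r) *\<^sub>R (lat p + z)"
    have x: "?x$1 = (of_int (fst p) + z$1) / r" "?x$2 = (of_int (snd p) + z$2) / r"
      by (simp_all add: divide_inverse mult.commute)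
    have "fst p \<in> I1" "snd p \<in> I2"
      using that by auto
    then have "\<bar>?x$1 - a$1\<bar> \<le> d / 3" "\<bar>?x$2 - a$2\<bar> \<le> d / 3"
      unfolding x by (blast intro: scaled I1(3) I2(3))+
    then have "norm (?x - a) < d"
      using norm_le_abs_components2[of "?x - a"] d by simp
    then show ?thesis
      by (simp add: dist_norm norm_minus_commute)
  qed
  with card I1(1) I2(1) show ?thesis
    by (intro exI[of _ "I1 \<times> I2"]) auto
qed

context nonzero_schwartz2
begin

lemma lattice_sum_sq_shift_lower_scaled:
  "\<exists>c>0. \<exists>\<delta>>0. \<forall>r y z. 3 \<le> r * \<delta> \<longrightarrow> (\<exists>P. finite P \<and>
     (r * \<delta> / 3)\<^sup>2 * (c * min (norm (y - z) / r) 1)\<^sup>2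
       \<le> (\<Sum>p\<in>P. (f ((1 / r) *\<^sub>R (lat p + y)) - f ((1 / r) *\<^sub>R (lat p + z)))\<^sup>2))"
proof -
  obtain c \<delta> where c: "c > 0" "\<delta> > 0"
    and pointwise: "\<And>s. \<exists>a. \<forall>b\<in>ball a \<delta>. c * min (norm s) 1 \<le> \<bar>f (b + s) - f b\<bar>"
    using shift_lower_bound by blast
  have "\<exists>P. finite P \<and> (r * \<delta> / 3)\<^sup>2 * (c * min (norm (y - z) / r) 1)\<^sup>2
       \<le> (\<Sum>p\<in>P. (f ((1 / r) *\<^sub>R (lat p + y)) - f ((1 / r) *\<^sub>R (lat p + z)))\<^sup>2)"
    if rd: "3 \<le> r * \<delta>" for r y z
  proof -
    have "0 < r * \<delta>"
      using rd by linarith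
    then have "r > 0"
      using c(2) by (simp add: zero_less_mult_iff)
    define s where "s = (1 / r) *\<^sub>R (y - z)"
    define m where "m = c * min (norm s) 1"
    obtain a where a: "\<And>b. b \<in> ball a \<delta> \<Longrightarrow> m \<le> \<bar>f (b + s) - f b\<bar>"
      using pointwise[of s] unfolding m_def by blast
    obtain P where P: "finite P" "(r * \<delta> / 3)\<^sup>2 \<le> real (card P)"
      "\<And>p. p \<in> P \<Longrightarrow> (1 / r) *\<^sub>R (lat p + z) \<in> ball a \<delta>"
      using scaled_lattice_points_in_ball[OF \<open>r > 0\<close> c(2) rd, of z a] by blast
    have "m\<^sup>2 \<le> (f ((1 / r) *\<^sub>R (lat p + y)) - f ((1 / r) *\<^sub>R (lat p + z)))\<^sup>2" if "p \<in> P" for p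
    proof -
      have "(1 / r) *\<^sub>R (lat p + y) = (1 / r) *\<^sub>R (lat p + z) + s"
        by (simp add: s_def algebra_simps)
      then have "\<bar>m\<bar> \<le> \<bar>f ((1 / r) *\<^sub>R (lat p + y)) - f ((1 / r) *\<^sub>R (lat p + z))\<bar>"
        using a[OF P(3)[OF that]] c by (simp add: m_def)
      then show ?thesis
        using power2_le_of_abs_le by fastforce
    qed
    then have "real (card P) * m\<^sup>2 \<le> (\<Sum>p\<in>P. (f ((1 / r) *\<^sub>R (lat p + y)) - f ((1 / r) *\<^sub>R (lat p + z)))\<^sup>2)"
      using sum_mono[of P "\<lambda>_. m\<^sup>2"] by simp
    moreover have "(r * \<delta> / 3)\<^sup>2 * m\<^sup>2 \<le> real (card P) * m\<^sup>2"
      using P(2) by (rule mult_right_mono) simp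
    moreover have "norm s = norm (y - z) / r"
      using \<open>r > 0\<close> by (simp add: s_def)
    ultimately show ?thesis
      using P(1) unfolding m_def by (intro exI[of _ P]) auto
  qed
  with c show ?thesis by blast
qed

lemma lattice_sum_sq_shift_lower:
  "\<exists>c>0. \<exists>r0>0. \<forall>r\<ge>r0. \<forall>y z. \<exists>P. finite P \<and>
     c * min ((norm (y - z))\<^sup>2) (r\<^sup>2) \<le> (\<Sum>p\<in>P. (f ((1 / r) *\<^sub>R (lat p + y)) - f ((1 / r) *\<^sub>R (lat p + z)))\<^sup>2)"
proof -
  obtain c \<delta> where c: "c > 0" "\<delta> > 0"
    and scaled: "\<forall>r y z. 3 \<le> r * \<delta> \<longrightarrow> (\<exists>P. finite P \<and>
      (r * \<delta> / 3)\<^sup>2 * (c * min (norm (y - z) / r) 1)\<^sup>2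
        \<le> (\<Sum>p\<in>P. (f ((1 / r) *\<^sub>R (lat p + y)) - f ((1 / r) *\<^sub>R (lat p + z)))\<^sup>2))"
    using lattice_sum_sq_shift_lower_scaled by blast
  have "\<exists>P. finite P \<and> (c * \<delta> / 3)\<^sup>2 * min ((norm (y - z))\<^sup>2) (r\<^sup>2)
      \<le> (\<Sum>p\<in>P. (f ((1 / r) *\<^sub>R (lat p + y)) - f ((1 / r) *\<^sub>R (lat p + z)))\<^sup>2)"
    if "3 / \<delta> \<le> r" for r y z
  proof -
    have "r > 0" "3 \<le> r * \<delta>"
      using that c less_le_trans[of 0 "3 / \<delta>" r] by (simp_all add: divide_le_eq)
    have "r * min (norm (y - z) / r) 1 = min (norm (y - z)) r"
      using \<open>r > 0\<close> by (simp add: min_mult_distrib_left)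
    then have "min ((norm (y - z))\<^sup>2) (r\<^sup>2) = (r * min (norm (y - z) / r) 1)\<^sup>2"
      using \<open>r > 0\<close> by (simp add: min_def)
    then have eq: "(c * \<delta> / 3)\<^sup>2 * min ((norm (y - z))\<^sup>2) (r\<^sup>2) = (r * \<delta> / 3)\<^sup>2 * (c * min (norm (y - z) / r) 1)\<^sup>2"
      by (simp add: power_mult_distrib power_divide mult_ac)
    from scaled[rule_format, OF \<open>3 \<le> r * \<delta>\<close>, of y z] show ?thesis
      unfolding eq .
  qed
  moreover have "(c * \<delta> / 3)\<^sup>2 > 0" "3 / \<delta> > 0"
    using c by auto
  ultimately show ?thesis by blast
qed

end

(* Dominates (1 + norm x)^-4 up to a constant, and is a product over the coordinates,
   so that its sums over scaled lattice points factor into one-dimensional sums. *)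
definition decay_weight :: "real^2 \<Rightarrow> real" where
  "decay_weight x = 1 / ((1 + \<bar>x$1\<bar>)\<^sup>2 * (1 + \<bar>x$2\<bar>)\<^sup>2)"

lemma decay_weight_pos: "0 < decay_weight x"
  and decay_weight_le_1: "decay_weight x \<le> 1"
  unfolding decay_weight_def by (auto simp: field_simps intro!: one_le_power mult_ge1_I)

lemma le_decay_weight:
  assumes bound: "y * (1 + norm x) ^ 4 \<le> C" and y: "0 \<le> y" and near: "dist x a \<le> 1"
  shows "y \<le> 16 * C * decay_weight a"
proof -
  have "norm a \<le> norm x + 1"
    using norm_triangle_sub[of a x] near by (simp add: dist_norm norm_minus_commute)
  then have a: "1 + norm a \<le> 2 * (1 + norm x)"
    unfolding distrib_left using norm_ge_zero[of x] by linarith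
  have "(1 + \<bar>a$1\<bar>) * (1 + \<bar>a$2\<bar>) \<le> (1 + norm a) * (1 + norm a)"
    by (intro mult_mono add_left_mono component_le_norm_cart) auto
  also have "\<dots> \<le> (2 * (1 + norm x)) * (2 * (1 + norm x))"
    using a by (intro mult_mono) auto
  finally have "((1 + \<bar>a$1\<bar>) * (1 + \<bar>a$2\<bar>))\<^sup>2 \<le> ((2 * (1 + norm x)) * (2 * (1 + norm x)))\<^sup>2"
    by (intro power_mono) auto
  also have "((2 * (1 + norm x)) * (2 * (1 + norm x)))\<^sup>2 = 16 * (1 + norm x) ^ 4"
    by algebra
  finally have "(1 + \<bar>a$1\<bar>)\<^sup>2 * (1 + \<bar>a$2\<bar>)\<^sup>2 \<le> 16 * (1 + norm x) ^ 4"
    by (simp add: power_mult_distrib)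
  then have "y * ((1 + \<bar>a$1\<bar>)\<^sup>2 * (1 + \<bar>a$2\<bar>)\<^sup>2) \<le> y * (16 * (1 + norm x) ^ 4)"
    using y by (rule mult_left_mono)
  also have "\<dots> \<le> 16 * C"
    using bound by simp
  finally show ?thesis
    by (simp add: decay_weight_def field_simps)
qed

lemma sum_sq_ratio_le: "r > 0 \<Longrightarrow> (\<Sum>k\<le>N. (r / (r + real k))\<^sup>2) \<le> 1 + r - r\<^sup>2 / (r + real N)"
proof (induction N)
  case 0
  then show ?case by (simp add: power2_eq_square)
next
  case (Suc N)
  have pos: "r + real N > 0" "r + real (Suc N) > 0"
    using Suc by auto
  \<comment> \<open>telescoping: \<open>1/(r+N+1)\<^sup>2 \<le> 1/(r+N) - 1/(r+N+1)\<close>\<close>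
  have "(r / (r + real (Suc N)))\<^sup>2 \<le> r\<^sup>2 / ((r + real N) * (r + real (Suc N)))"
    unfolding power_divide using pos
    by (intro divide_left_mono) (auto simp: power2_eq_square intro!: mult_right_mono mult_pos_pos)
  also have "\<dots> = r\<^sup>2 / (r + real N) - r\<^sup>2 / (r + real (Suc N))"
    using pos by (simp add: field_simps)
  finally show ?case
    using Suc by simp
qed

lemma sum_int_weight_nonneg:
  fixes A :: "int set" and r t :: real
  assumes r: "r > 0" and A: "finite A" and nonneg: "\<And>m. m \<in> A \<Longrightarrow> 0 \<le> of_int m + t"
  shows "(\<Sum>m\<in>A. (r / (r + (of_int m + t)))\<^sup>2) \<le> 1 + r"
proof -
  define k where "k m = nat \<lfloor>of_int m + t\<rfloor>" for m :: int
  have "inj_on k A"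
  proof (rule inj_onI)
    fix m m' assume "m \<in> A" "m' \<in> A" "k m = k m'"
    moreover have "0 \<le> \<lfloor>of_int m + t\<rfloor>" "0 \<le> \<lfloor>of_int m' + t\<rfloor>"
      using nonneg[OF \<open>m \<in> A\<close>] nonneg[OF \<open>m' \<in> A\<close>] by (simp_all only: zero_le_floor)
    ultimately have "\<lfloor>of_int m + t\<rfloor> = \<lfloor>of_int m' + t\<rfloor>"
      unfolding k_def by (simp only: eq_nat_nat_iff)
    then show "m = m'"
      by simp
  qed
  have "(\<Sum>m\<in>A. (r / (r + (of_int m + t)))\<^sup>2) \<le> (\<Sum>m\<in>A. (r / (r + real (k m)))\<^sup>2)"
  proof (rule sum_mono)
    fix m assume "m \<in> A"
    then have "0 \<le> \<lfloor>of_int m + t\<rfloor>"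
      using nonneg by (simp only: zero_le_floor)
    then have "real (k m) = of_int \<lfloor>of_int m + t\<rfloor>"
      by (simp only: k_def of_nat_nat)
    then have "real (k m) \<le> of_int m + t"
      by (simp only: of_int_floor_le)
    then show "(r / (r + (of_int m + t)))\<^sup>2 \<le> (r / (r + real (k m)))\<^sup>2"
      using r by (intro power_mono divide_left_mono) auto
  qed
  also have "\<dots> = (\<Sum>j\<in>k ` A. (r / (r + real j))\<^sup>2)"
    by (simp add: sum.reindex[OF \<open>inj_on k A\<close>])
  also have "\<dots> \<le> (\<Sum>j\<le>Max (k ` A). (r / (r + real j))\<^sup>2)"
    using A by (intro sum_mono2) auto
  also have "\<dots> \<le> 1 + r"
  proof -
    have "0 \<le> r\<^sup>2 / (r + real (Max (k ` A)))"
      using r by simp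
    then show ?thesis
      using sum_sq_ratio_le[OF r, of "Max (k ` A)"] by linarith
  qed
  finally show ?thesis .
qed

lemma sum_int_weight:
  fixes A :: "int set" and r t :: real
  assumes r: "r > 0" and A: "finite A"
  shows "(\<Sum>m\<in>A. (r / (r + \<bar>of_int m + t\<bar>))\<^sup>2) \<le> 2 * (1 + r)"
proof -
  let ?g = "\<lambda>m. (r / (r + \<bar>of_int m + t\<bar>))\<^sup>2"
  define A1 where "A1 = {m\<in>A. 0 \<le> of_int m + t}"
  define A2 where "A2 = {m\<in>A. of_int m + t < 0}"
  have "A = A1 \<union> A2" "A1 \<inter> A2 = {}" "finite A1" "finite A2"
    using A by (auto simp: A1_def A2_def)
  then have "sum ?g A = sum ?g A1 + sum ?g A2"
    by (metis sum.union_disjoint)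
  also have "sum ?g A1 = (\<Sum>m\<in>A1. (r / (r + (of_int m + t)))\<^sup>2)"
    by (intro sum.cong) (auto simp: A1_def)
  also have "\<dots> \<le> 1 + r"
    using A by (intro sum_int_weight_nonneg r) (auto simp: A1_def)
  also have "sum ?g A2 = (\<Sum>m\<in>uminus ` A2. (r / (r + (of_int m + - t)))\<^sup>2)"
    by (subst sum.reindex) (auto simp: A2_def inj_on_def intro!: sum.cong)
  also have "\<dots> \<le> 1 + r"
    using A by (intro sum_int_weight_nonneg r) (auto simp: A2_def)
  finally show ?thesis by simp
qed

lemma sum_decay_weight_lattice:
  assumes r: "r > 0" and P: "finite P"
  shows "(\<Sum>p\<in>P. decay_weight ((1 / r) *\<^sub>R (lat p + y))) \<le> 4 * (1 + r)\<^sup>2"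
proof -
  define g where "g i m = (r / (r + \<bar>of_int m + y$i\<bar>))\<^sup>2" for i m
  have factor: "1 / (1 + \<bar>w / r\<bar>)\<^sup>2 = (r / (r + \<bar>w\<bar>))\<^sup>2" for w
    using r by (simp add: abs_divide power_divide field_simps)
  have "((1 / r) *\<^sub>R (lat p + y))$1 = (of_int (fst p) + y$1) / r"
    "((1 / r) *\<^sub>R (lat p + y))$2 = (of_int (snd p) + y$2) / r" for p
    by (simp_all add: divide_inverse mult.commute)
  then have weight: "decay_weight ((1 / r) *\<^sub>R (lat p + y)) = g 1 (fst p) * g 2 (snd p)" for p
    unfolding decay_weight_def g_def factor[symmetric] by simp
  have "(\<Sum>p\<in>P. decay_weight ((1 / r) *\<^sub>R (lat p + y))) \<le> (\<Sum>p\<in>fst ` P \<times> snd ` P. g 1 (fst p) * g 2 (snd p))"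
    unfolding weight using P by (intro sum_mono2) (auto simp: g_def intro: rev_image_eqI)
  also have "\<dots> = (\<Sum>m\<in>fst ` P. g 1 m) * (\<Sum>m\<in>snd ` P. g 2 m)"
    by (simp add: sum_product sum.cartesian_product case_prod_beta)
  also have "\<dots> \<le> (2 * (1 + r)) * (2 * (1 + r))"
    using sum_int_weight[OF r] P r unfolding g_def by (intro mult_mono sum_nonneg) auto
  also have "\<dots> = 4 * (1 + r)\<^sup>2"
    by (simp add: power2_eq_square algebra_simps)
  finally show ?thesis .
qed

context schwartz2_function
begin

lemma f_le_decay_weight: "\<exists>C\<ge>0. \<forall>x. \<bar>f x\<bar> \<le> C * decay_weight x"
proof -
  obtain C where C: "\<And>x. \<bar>f x\<bar> * (1 + norm x) ^ 4 \<le> C"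
    using f_decay by blast
  then have "0 \<le> C"
    by (meson abs_ge_zero mult_nonneg_nonneg norm_ge_zero order_trans zero_le_power add_nonneg_nonneg zero_le_one)
  moreover have "\<bar>f x\<bar> \<le> 16 * C * decay_weight x" for x
    by (rule le_decay_weight[OF C]) auto
  ultimately show ?thesis
    by (intro exI[of _ "16 * C"]) auto
qed

lemma partial_deriv_le_decay_weight:
  "\<exists>C\<ge>0. \<forall>i x a. dist x a \<le> 1 \<longrightarrow> \<bar>partial_deriv f i x\<bar> \<le> C * decay_weight a"
proof -
  obtain C where C: "\<And>i x. \<bar>partial_deriv f i x\<bar> * (1 + norm x) ^ 4 \<le> C"
    using partial_deriv_decay by blast
  then have "0 \<le> C"
    by (meson abs_ge_zero mult_nonneg_nonneg norm_ge_zero order_trans zero_le_power add_nonneg_nonneg zero_le_one)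
  moreover have "\<bar>partial_deriv f i x\<bar> \<le> 16 * C * decay_weight a" if "dist x a \<le> 1" for i x a
    by (rule le_decay_weight[OF C]) (auto simp: that)
  ultimately show ?thesis
    by (intro exI[of _ "16 * C"]) auto
qed

lemma lattice_sum_abs_le:
  "\<exists>C. \<forall>r>0. \<forall>y P. finite P \<longrightarrow> (\<Sum>p\<in>P. \<bar>f ((1 / r) *\<^sub>R (lat p + y))\<bar>) \<le> C * (1 + r)\<^sup>2"
proof -
  obtain C where C: "C \<ge> 0" "\<And>x. \<bar>f x\<bar> \<le> C * decay_weight x"
    using f_le_decay_weight by blast
  have "(\<Sum>p\<in>P. \<bar>f ((1 / r) *\<^sub>R (lat p + y))\<bar>) \<le> (4 * C) * (1 + r)\<^sup>2" if "r > 0" "finite P" for r y P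
  proof -
    have "(\<Sum>p\<in>P. \<bar>f ((1 / r) *\<^sub>R (lat p + y))\<bar>) \<le> C * (\<Sum>p\<in>P. decay_weight ((1 / r) *\<^sub>R (lat p + y)))"
      unfolding sum_distrib_left by (intro sum_mono C(2))
    also have "\<dots> \<le> C * (4 * (1 + r)\<^sup>2)"
      using sum_decay_weight_lattice[OF that] C(1) by (rule mult_left_mono)
    finally show ?thesis by simp
  qed
  then show ?thesis by blast
qed

lemma f_sq_le_decay_weight: "\<exists>C\<ge>0. \<forall>x. (f x)\<^sup>2 \<le> C * decay_weight x"
proof -
  obtain C where C: "C \<ge> 0" "\<And>x. \<bar>f x\<bar> \<le> C * decay_weight x"
    using f_le_decay_weight by blast
  have "(f x)\<^sup>2 \<le> C\<^sup>2 * decay_weight x" for x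
  proof -
    have "(f x)\<^sup>2 \<le> (C * decay_weight x)\<^sup>2"
      using C(2)[of x] by (rule power2_le_of_abs_le)
    also have "\<dots> = C\<^sup>2 * decay_weight x * decay_weight x"
      by (simp add: power2_eq_square)
    also have "\<dots> \<le> C\<^sup>2 * decay_weight x"
      using decay_weight_pos[of x] decay_weight_le_1[of x] by (simp add: mult_left_le)
    finally show ?thesis .
  qed
  then show ?thesis
    by (intro exI[of _ "C\<^sup>2"]) auto
qed

lemma lattice_sum_sq_shift_crude:
  "\<exists>K\<ge>0. \<forall>r>0. \<forall>y P. finite P \<longrightarrow>
     (\<Sum>p\<in>P. (f ((1 / r) *\<^sub>R (lat p + y)) - f ((1 / r) *\<^sub>R lat p))\<^sup>2) \<le> K * (1 + r)\<^sup>2"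
proof -
  obtain C where C: "C \<ge> 0" "\<And>x. (f x)\<^sup>2 \<le> C * decay_weight x"
    using f_sq_le_decay_weight by blast
  have "(\<Sum>p\<in>P. (f ((1 / r) *\<^sub>R (lat p + y)) - f ((1 / r) *\<^sub>R lat p))\<^sup>2) \<le> 16 * C * (1 + r)\<^sup>2"
    if r: "r > 0" and P: "finite P" for r y P
  proof -
    have sq: "(u - v)\<^sup>2 \<le> 2 * u\<^sup>2 + 2 * v\<^sup>2" for u v :: real
      using zero_le_power2[of "u + v"] by (simp add: power2_eq_square algebra_simps)
    have single: "(f a - f b)\<^sup>2 \<le> 2 * (C * decay_weight a) + 2 * (C * decay_weight b)" for a b
      using sq[of "f a" "f b"] C(2)[of a] C(2)[of b] by linarith
    have "(\<Sum>p\<in>P. (f ((1 / r) *\<^sub>R (lat p + y)) - f ((1 / r) *\<^sub>R lat p))\<^sup>2)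
        \<le> (\<Sum>p\<in>P. 2 * (C * decay_weight ((1 / r) *\<^sub>R (lat p + y))) + 2 * (C * decay_weight ((1 / r) *\<^sub>R lat p)))"
      by (intro sum_mono single)
    also have "\<dots> = 2 * C * (\<Sum>p\<in>P. decay_weight ((1 / r) *\<^sub>R (lat p + y)))
        + 2 * C * (\<Sum>p\<in>P. decay_weight ((1 / r) *\<^sub>R (lat p + 0)))"
      by (simp add: sum.distrib sum_distrib_left mult.assoc)
    also have "\<dots> \<le> 2 * C * (4 * (1 + r)\<^sup>2) + 2 * C * (4 * (1 + r)\<^sup>2)"
      using sum_decay_weight_lattice[OF r P, of y] sum_decay_weight_lattice[OF r P, of 0] C(1)
      by (intro add_mono mult_left_mono) auto
    finally show ?thesis by simp
  qed
  with C(1) show ?thesis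
    by (intro exI[of _ "16 * C"]) auto
qed

lemma lattice_sum_sq_shift_fine:
  "\<exists>K\<ge>0. \<forall>r y P. finite P \<and> 1 \<le> r \<and> norm y \<le> r \<longrightarrow>
     (\<Sum>p\<in>P. (f ((1 / r) *\<^sub>R (lat p + y)) - f ((1 / r) *\<^sub>R lat p))\<^sup>2) \<le> K * (norm y)\<^sup>2"
proof -
  obtain C where C: "C \<ge> 0" "\<And>i x a. dist x a \<le> 1 \<Longrightarrow> \<bar>partial_deriv f i x\<bar> \<le> C * decay_weight a"
    using partial_deriv_le_decay_weight by blast
  have single: "(f (b + s) - f b)\<^sup>2 \<le> 4 * C\<^sup>2 * (norm s)\<^sup>2 * decay_weight b" if s: "norm s \<le> 1" for b s
  proof -
    have "\<bar>f (b + s) - f b\<bar> \<le> 2 * (C * decay_weight b) * norm s"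
      using s by (intro shift_bound[where S = "cball b 1"] C(2)) (auto simp: dist_norm norm_minus_commute)
    then have "(f (b + s) - f b)\<^sup>2 \<le> (2 * (C * decay_weight b) * norm s)\<^sup>2"
      by (rule power2_le_of_abs_le)
    also have "\<dots> = 4 * C\<^sup>2 * (norm s)\<^sup>2 * decay_weight b * decay_weight b"
      by (simp add: power2_eq_square)
    also have "\<dots> \<le> 4 * C\<^sup>2 * (norm s)\<^sup>2 * decay_weight b"
      using decay_weight_pos[of b] decay_weight_le_1[of b] by (simp add: mult_left_le)
    finally show ?thesis .
  qed
  have "(\<Sum>p\<in>P. (f ((1 / r) *\<^sub>R (lat p + y)) - f ((1 / r) *\<^sub>R lat p))\<^sup>2) \<le> 64 * C\<^sup>2 * (norm y)\<^sup>2"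
    if P: "finite P" and r: "1 \<le> r" and y: "norm y \<le> r" for r y P
  proof -
    define s where "s = (1 / r) *\<^sub>R y"
    have s: "norm s \<le> 1" "(1 / r) *\<^sub>R (lat p + y) = (1 / r) *\<^sub>R lat p + s" for p
      using r y by (simp_all add: s_def scaleR_add_right)
    have "(\<Sum>p\<in>P. (f ((1 / r) *\<^sub>R (lat p + y)) - f ((1 / r) *\<^sub>R lat p))\<^sup>2)
        \<le> 4 * C\<^sup>2 * (norm s)\<^sup>2 * (\<Sum>p\<in>P. decay_weight ((1 / r) *\<^sub>R (lat p + 0)))"
      unfolding sum_distrib_left s(2) using single[OF s(1)] by (intro sum_mono) simp
    also have "\<dots> \<le> 4 * C\<^sup>2 * (norm s)\<^sup>2 * (4 * (2 * r)\<^sup>2)"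
      using sum_decay_weight_lattice[of r P 0] P r power_mono[of "1 + r" "2 * r" 2]
      by (intro mult_left_mono) auto
    also have "\<dots> = 64 * C\<^sup>2 * (norm y)\<^sup>2"
      using r by (simp add: s_def power_mult_distrib power_divide)
    finally show ?thesis .
  qed
  then show ?thesis
    by (intro exI[of _ "64 * C\<^sup>2"]) auto
qed

lemma lattice_sum_sq_shift_upper:
  "\<exists>K. \<forall>r>0. \<forall>y P. finite P \<longrightarrow>
     (\<Sum>p\<in>P. (f ((1 / r) *\<^sub>R (lat p + y)) - f ((1 / r) *\<^sub>R lat p))\<^sup>2) \<le> K * (1 + (norm y)\<^sup>2)"
proof -
  obtain K0 where K0: "K0 \<ge> 0" "\<And>r y P. r > 0 \<Longrightarrow> finite P \<Longrightarrow>
      (\<Sum>p\<in>P. (f ((1 / r) *\<^sub>R (lat p + y)) - f ((1 / r) *\<^sub>R lat p))\<^sup>2) \<le> K0 * (1 + r)\<^sup>2"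
    using lattice_sum_sq_shift_crude by blast
  obtain K1 where K1: "K1 \<ge> 0" "\<And>r y P. finite P \<Longrightarrow> 1 \<le> r \<Longrightarrow> norm y \<le> r \<Longrightarrow>
      (\<Sum>p\<in>P. (f ((1 / r) *\<^sub>R (lat p + y)) - f ((1 / r) *\<^sub>R lat p))\<^sup>2) \<le> K1 * (norm y)\<^sup>2"
    using lattice_sum_sq_shift_fine by blast
  have "(\<Sum>p\<in>P. (f ((1 / r) *\<^sub>R (lat p + y)) - f ((1 / r) *\<^sub>R lat p))\<^sup>2) \<le> (4 * K0 + K1) * (1 + (norm y)\<^sup>2)"
    if r: "r > 0" and P: "finite P" for r y P
  proof (cases "1 \<le> r \<and> norm y \<le> r")
    case True
    then have "(\<Sum>p\<in>P. (f ((1 / r) *\<^sub>R (lat p + y)) - f ((1 / r) *\<^sub>R lat p))\<^sup>2) \<le> K1 * (norm y)\<^sup>2"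
      using K1(2) P by blast
    also have "\<dots> \<le> (4 * K0 + K1) * (1 + (norm y)\<^sup>2)"
      using K0(1) K1(1) by (intro mult_mono) auto
    finally show ?thesis .
  next
    case False
    have "r\<^sup>2 \<le> 1 + (norm y)\<^sup>2"
    proof (cases "r < 1")
      case True
      then have "r\<^sup>2 \<le> 1"
        using r by (simp add: power_le_one)
      then show ?thesis
        using zero_le_power2[of "norm y"] by linarith
    next
      case False
      with \<open>\<not> (1 \<le> r \<and> norm y \<le> r)\<close> have "r\<^sup>2 \<le> (norm y)\<^sup>2"
        using r by (intro power_mono) auto
      then show ?thesis by simp
    qed
    moreover have "(1 + r)\<^sup>2 \<le> 2 + 2 * r\<^sup>2"
      using zero_le_power2[of "1 - r"] by (simp add: power2_eq_square algebra_simps)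
    ultimately have "(1 + r)\<^sup>2 \<le> 4 + 4 * (norm y)\<^sup>2"
      using zero_le_power2[of "norm y"] by linarith
    then have "(\<Sum>p\<in>P. (f ((1 / r) *\<^sub>R (lat p + y)) - f ((1 / r) *\<^sub>R lat p))\<^sup>2) \<le> K0 * (4 + 4 * (norm y)\<^sup>2)"
      using K0 r P by (meson mult_left_mono order_trans)
    also have "\<dots> \<le> (4 * K0 + K1) * (1 + (norm y)\<^sup>2)"
      using K1(1) by (simp add: algebra_simps)
    finally show ?thesis .
  qed
  then show ?thesis by blast
qed

end

lemma infsum_eq_suminf_bij:
  fixes g :: "'b \<Rightarrow> real" and e :: "nat \<Rightarrow> 'b"
  assumes "bij e"
  shows "infsum g UNIV = (if summable (\<lambda>k. \<bar>g (e k)\<bar>) then (\<Sum>k. g (e k)) else 0)"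
proof -
  have reindex: "infsum g UNIV = infsum (\<lambda>k. g (e k)) UNIV"
    using infsum_reindex_bij_betw[of e UNIV UNIV g] assms by (simp add: bij_def)
  show ?thesis
  proof (cases "summable (\<lambda>k. \<bar>g (e k)\<bar>)")
    case True
    then have "((\<lambda>k. g (e k)) has_sum (\<Sum>k. g (e k))) UNIV"
      by (intro norm_summable_imp_has_sum) (auto simp: summable_sums summable_rabs_cancel)
    with True reindex show ?thesis
      by (simp add: infsumI)
  next
    case False
    then have "\<not> (\<lambda>k. g (e k)) summable_on UNIV"
      using summable_on_iff_abs_summable_on_real summable_on_imp_summable by fastforce
    with False reindex show ?thesis
      by (simp add: infsum_not_exists)
  qed
qed

lemma suminf_ennreal_le_if_finite_sums_le:
  fixes g :: "'b \<Rightarrow> real" and e :: "nat \<Rightarrow> 'b"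
  assumes "inj e" and finite_sums: "\<And>P. finite P \<Longrightarrow> (\<Sum>p\<in>P. g p) \<le> B" and nonneg: "\<And>p. 0 \<le> g p"
  shows "(\<Sum>k. ennreal (g (e k))) \<le> ennreal B"
  unfolding suminf_eq_SUP
proof (rule SUP_least)
  fix n
  have "inj_on e {..<n}"
    using \<open>inj e\<close> by (simp add: inj_on_def)
  then have "(\<Sum>k<n. ennreal (g (e k))) = ennreal (\<Sum>p\<in>e ` {..<n}. g p)"
    using nonneg by (simp add: sum.reindex)
  also have "\<dots> \<le> ennreal B"
    using finite_sums by (intro ennreal_leI) simp
  finally show "(\<Sum>k<n. ennreal (g (e k))) \<le> ennreal B" .
qed

lemma finite_sum_le_suminf_ennreal:
  fixes g :: "'b \<Rightarrow> real" and e :: "nat \<Rightarrow> 'b"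
  assumes "bij e" and P: "finite P" and nonneg: "\<And>p. 0 \<le> g p"
  shows "ennreal (\<Sum>p\<in>P. g p) \<le> (\<Sum>k. ennreal (g (e k)))"
proof -
  define n where "n = Suc (Max (inv e ` P))"
  have "P \<subseteq> e ` {..<n}"
  proof
    fix p assume "p \<in> P"
    then have "inv e p < n"
      using P by (simp add: n_def le_imp_less_Suc)
    moreover have "e (inv e p) = p"
      using \<open>bij e\<close> by (simp add: bij_is_surj surj_f_inv_f)
    ultimately show "p \<in> e ` {..<n}"
      by (metis imageI lessThan_iff)
  qed
  then have "ennreal (\<Sum>p\<in>P. g p) \<le> ennreal (\<Sum>p\<in>e ` {..<n}. g p)"
    using nonneg by (intro ennreal_leI sum_mono2) auto
  also have "\<dots> = (\<Sum>k<n. ennreal (g (e k)))"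
  proof -
    have "inj_on e {..<n}"
      using bij_is_inj[OF \<open>bij e\<close>] by (simp add: inj_on_def)
    then show ?thesis
      using nonneg by (simp add: sum.reindex)
  qed
  also have "\<dots> \<le> (\<Sum>k. ennreal (g (e k)))"
    by (rule sum_le_suminf) auto
  finally show ?thesis .
qed

lemma ennreal_integral_le_nn_integral:
  fixes \<phi> :: "'a \<Rightarrow> real"
  assumes "integrable M \<phi>"
  shows "ennreal (integral\<^sup>L M \<phi>) \<le> (\<integral>\<^sup>+x. ennreal (\<phi> x) \<partial>M)"
proof -
  have int: "integrable M (\<lambda>x. max (\<phi> x) 0)"
    using assms by auto
  have "ennreal (integral\<^sup>L M \<phi>) \<le> ennreal (integral\<^sup>L M (\<lambda>x. max (\<phi> x) 0))"
    using assms int by (intro ennreal_leI integral_mono) auto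
  also have "\<dots> = (\<integral>\<^sup>+x. ennreal (max (\<phi> x) 0) \<partial>M)"
    using int by (intro nn_integral_eq_integral[symmetric]) auto
  also have "\<dots> = (\<integral>\<^sup>+x. ennreal (\<phi> x) \<partial>M)"
    by (intro nn_integral_cong) (auto simp: max_def ennreal_neg)
  finally show ?thesis .
qed

lemma nn_integral_le_if_truncations_le:
  fixes g :: "'a \<Rightarrow> real"
  assumes [measurable]: "g \<in> borel_measurable M"
    and truncated: "\<And>t. a \<le> t \<Longrightarrow> (\<integral>\<^sup>+\<omega>. ennreal (min (g \<omega>) t) \<partial>M) \<le> C"
  shows "(\<integral>\<^sup>+\<omega>. ennreal (g \<omega>) \<partial>M) \<le> C"
proof -
  define h where "h n \<omega> = ennreal (min (g \<omega>) (a + real n))" for n \<omega>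
  have "incseq h"
    by (intro incseq_SucI le_funI) (auto simp: h_def intro!: ennreal_leI)
  have "(SUP n. h n \<omega>) = ennreal (g \<omega>)" for \<omega>
  proof (rule antisym)
    show "(SUP n. h n \<omega>) \<le> ennreal (g \<omega>)"
      by (intro SUP_least) (simp add: h_def ennreal_leI)
    obtain n :: nat where "g \<omega> - a \<le> n"
      using real_arch_simple by blast
    then have "h n \<omega> = ennreal (g \<omega>)"
      by (simp add: h_def min_def)
    then show "ennreal (g \<omega>) \<le> (SUP n. h n \<omega>)"
      by (metis SUP_upper UNIV_I)
  qed
  then have "(\<integral>\<^sup>+\<omega>. ennreal (g \<omega>) \<partial>M) = (\<integral>\<^sup>+\<omega>. (SUP n. h n \<omega>) \<partial>M)"
    by simp
  also have "\<dots> = (SUP n. \<integral>\<^sup>+\<omega>. h n \<omega> \<partial>M)"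
    by (rule nn_integral_monotone_convergence_SUP[OF \<open>incseq h\<close>]) (unfold h_def, measurable)
  also have "\<dots> \<le> C"
    unfolding h_def by (intro SUP_least truncated) simp
  finally show ?thesis .
qed

context prob_space
begin

lemma indep_vars_indep_var:
  assumes "indep_vars M' X I" "i \<in> I" "j \<in> I" "i \<noteq> j"
  shows "indep_var (M' i) (X i) (M' j) (X j)"
proof -
  have "indep_var (PiM {i} M') (\<lambda>\<omega>. restrict (\<lambda>k. X k \<omega>) {i}) (PiM {j} M') (\<lambda>\<omega>. restrict (\<lambda>k. X k \<omega>) {j})"
    using assms by (intro indep_var_restrict) auto
  from indep_var_compose[OF this measurable_component_singleton measurable_component_singleton]
  show ?thesis
    by (simp add: comp_def)
qed

lemma evariance_cong_AE:
  assumes "X \<in> borel_measurable M" "Y \<in> borel_measurable M" "AE \<omega> in M. X \<omega> = Y \<omega>"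
  shows "evariance M X = evariance M Y"
proof -
  have "expectation X = expectation Y"
    using assms by (rule integral_cong_AE)
  with assms(3) show ?thesis
    unfolding evariance_def by (intro nn_integral_cong_AE) auto
qed

lemma variance_le_mean_sq_dev:
  fixes Y :: "'a \<Rightarrow> real"
  assumes [simp]: "integrable M Y" "integrable M (\<lambda>\<omega>. (Y \<omega>)\<^sup>2)"
  shows "variance Y \<le> expectation (\<lambda>\<omega>. (Y \<omega> - c)\<^sup>2)"
proof -
  have "(\<lambda>\<omega>. (Y \<omega> - c)\<^sup>2) = (\<lambda>\<omega>. (Y \<omega>)\<^sup>2 - 2 * c * Y \<omega> + c\<^sup>2)"
    by (simp add: fun_eq_iff power2_eq_square algebra_simps)
  then have "expectation (\<lambda>\<omega>. (Y \<omega> - c)\<^sup>2) = expectation (\<lambda>\<omega>. (Y \<omega>)\<^sup>2) - 2 * c * expectation Y + c\<^sup>2"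
    by (simp add: prob_space)
  moreover have "variance Y = expectation (\<lambda>\<omega>. (Y \<omega>)\<^sup>2) - (expectation Y)\<^sup>2"
    by (rule variance_eq) simp_all
  ultimately have "expectation (\<lambda>\<omega>. (Y \<omega> - c)\<^sup>2) - variance Y = (expectation Y - c)\<^sup>2"
    by (simp add: power2_eq_square algebra_simps)
  then show ?thesis
    by (metis diff_ge_0_iff_ge zero_le_power2)
qed

lemma expectation_sq_diff_indep:
  fixes Y Y' :: "'a \<Rightarrow> real"
  assumes indep: "indep_var borel Y borel Y'" and same: "distr M borel Y' = distr M borel Y"
    and [simp]: "integrable M Y" "integrable M (\<lambda>\<omega>. (Y \<omega>)\<^sup>2)"
  shows "expectation (\<lambda>\<omega>. (Y \<omega> - Y' \<omega>)\<^sup>2) = 2 * variance Y"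
proof -
  have [measurable]: "Y \<in> borel_measurable M" "Y' \<in> borel_measurable M"
    using indep by (auto dest: indep_var_rv1 indep_var_rv2)
  have transfer: "integral\<^sup>L M (\<lambda>\<omega>. g (Y' \<omega>)) = integral\<^sup>L M (\<lambda>\<omega>. g (Y \<omega>))"
    and transfer_int: "integrable M (\<lambda>\<omega>. g (Y' \<omega>)) = integrable M (\<lambda>\<omega>. g (Y \<omega>))"
    if [measurable]: "g \<in> borel_measurable borel" for g :: "real \<Rightarrow> real"
  proof -
    have "integral\<^sup>L M (\<lambda>\<omega>. g (Y' \<omega>)) = integral\<^sup>L (distr M borel Y') g"
      by (simp add: integral_distr)
    also have "\<dots> = integral\<^sup>L M (\<lambda>\<omega>. g (Y \<omega>))"
      by (simp add: same integral_distr)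
    finally show "integral\<^sup>L M (\<lambda>\<omega>. g (Y' \<omega>)) = integral\<^sup>L M (\<lambda>\<omega>. g (Y \<omega>))" .
    have "integrable M (\<lambda>\<omega>. g (Y' \<omega>)) = integrable (distr M borel Y') g"
      by (simp add: integrable_distr_eq)
    also have "\<dots> = integrable M (\<lambda>\<omega>. g (Y \<omega>))"
      by (simp add: same integrable_distr_eq)
    finally show "integrable M (\<lambda>\<omega>. g (Y' \<omega>)) = integrable M (\<lambda>\<omega>. g (Y \<omega>))" .
  qed
  have [simp]: "integrable M Y'" "integrable M (\<lambda>\<omega>. (Y' \<omega>)\<^sup>2)"
    using transfer_int[of "\<lambda>x. x"] transfer_int[of "\<lambda>x. x\<^sup>2"] by simp_all
  have [simp]: "integrable M (\<lambda>\<omega>. Y \<omega> * Y' \<omega>)"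
    using indep by (rule indep_var_integrable) simp_all
  have "expectation (\<lambda>\<omega>. Y \<omega> * Y' \<omega>) = expectation Y * expectation Y'"
    using indep by (rule indep_var_lebesgue_integral) simp_all
  moreover have "expectation Y' = expectation Y" "expectation (\<lambda>\<omega>. (Y' \<omega>)\<^sup>2) = expectation (\<lambda>\<omega>. (Y \<omega>)\<^sup>2)"
    using transfer[of "\<lambda>x. x"] transfer[of "\<lambda>x. x\<^sup>2"] by simp_all
  moreover have "(\<lambda>\<omega>. (Y \<omega> - Y' \<omega>)\<^sup>2) = (\<lambda>\<omega>. (Y \<omega>)\<^sup>2 + (Y' \<omega>)\<^sup>2 - 2 * (Y \<omega> * Y' \<omega>))"
    by (simp add: fun_eq_iff power2_eq_square algebra_simps)
  then have "expectation (\<lambda>\<omega>. (Y \<omega> - Y' \<omega>)\<^sup>2)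
      = expectation (\<lambda>\<omega>. (Y \<omega>)\<^sup>2) + expectation (\<lambda>\<omega>. (Y' \<omega>)\<^sup>2) - 2 * expectation (\<lambda>\<omega>. Y \<omega> * Y' \<omega>)"
    by simp
  moreover have "variance Y = expectation (\<lambda>\<omega>. (Y \<omega>)\<^sup>2) - expectation Y * expectation Y"
    using variance_eq[OF assms(3,4)] by (simp add: power2_eq_square)
  ultimately show ?thesis
    by simp
qed

lemma nn_integral_indep_pair:
  assumes indep: "indep_var borel X borel X'" and same: "distr M borel X' = distr M borel X"
    and g: "g \<in> borel_measurable (borel \<Otimes>\<^sub>M borel)"
  shows "(\<integral>\<^sup>+\<omega>. g (X \<omega>, X' \<omega>) \<partial>M) = (\<integral>\<^sup>+x. \<integral>\<^sup>+y. g (x, y) \<partial>distr M borel X \<partial>distr M borel X)"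
proof -
  have [measurable]: "X \<in> borel_measurable M" "X' \<in> borel_measurable M"
    using indep by (auto dest: indep_var_rv1 indep_var_rv2)
  interpret \<mu>: prob_space "distr M borel X"
    by (rule prob_space_distr) measurable
  have "sets (distr M borel X \<Otimes>\<^sub>M distr M borel X) = sets (borel \<Otimes>\<^sub>M borel)"
    by (intro sets_pair_measure_cong) auto
  then have g': "g \<in> borel_measurable (distr M borel X \<Otimes>\<^sub>M distr M borel X)"
    using g measurable_cong_sets by blast
  have "(\<integral>\<^sup>+\<omega>. g (X \<omega>, X' \<omega>) \<partial>M) = (\<integral>\<^sup>+z. g z \<partial>distr M (borel \<Otimes>\<^sub>M borel) (\<lambda>\<omega>. (X \<omega>, X' \<omega>)))"
    using g by (subst nn_integral_distr) auto
  also have "distr M (borel \<Otimes>\<^sub>M borel) (\<lambda>\<omega>. (X \<omega>, X' \<omega>)) = distr M borel X \<Otimes>\<^sub>M distr M borel X"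
    using indep unfolding indep_var_distribution_eq same by simp
  finally show ?thesis
    using \<mu>.nn_integral_fst[OF g'] by simp
qed

lemma nn_integral_norm_sq_finite_if_diff:
  fixes X X' :: "'a \<Rightarrow> 'b::euclidean_space"
  assumes indep: "indep_var borel X borel X'" and same: "distr M borel X' = distr M borel X"
    and diff: "(\<integral>\<^sup>+\<omega>. ennreal ((norm (X \<omega> - X' \<omega>))\<^sup>2) \<partial>M) < \<infinity>"
  shows "(\<integral>\<^sup>+\<omega>. ennreal ((norm (X \<omega>))\<^sup>2) \<partial>M) < \<infinity>"
proof -
  have [measurable]: "X \<in> borel_measurable M"
    using indep by (auto dest: indep_var_rv1)
  let ?\<mu> = "distr M borel X"
  interpret \<mu>: prob_space ?\<mu>
    by (rule prob_space_distr) measurable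
  define g where "g z = ennreal ((norm (fst z - snd z))\<^sup>2)" for z :: "'b \<times> 'b"
  have "g \<in> borel_measurable (borel \<Otimes>\<^sub>M borel)"
    unfolding g_def by measurable
  from nn_integral_indep_pair[OF indep same this]
  have "(\<integral>\<^sup>+x. \<integral>\<^sup>+y. g (x, y) \<partial>?\<mu> \<partial>?\<mu>) \<noteq> \<infinity>"
    using diff by (simp add: g_def)
  then have "AE x in ?\<mu>. (\<integral>\<^sup>+y. g (x, y) \<partial>?\<mu>) \<noteq> \<infinity>"
    by (intro nn_integral_PInf_AE \<mu>.borel_measurable_nn_integral_fst) (simp add: g_def)
  then have "\<exists>x. (\<integral>\<^sup>+y. g (x, y) \<partial>?\<mu>) \<noteq> \<infinity>"
    by (rule contrapos_pp) (simp add: \<mu>.AE_False)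
  then obtain x0 where x0: "(\<integral>\<^sup>+y. g (x0, y) \<partial>?\<mu>) \<noteq> \<infinity>" ..
  have "ennreal ((norm y)\<^sup>2) \<le> 2 * g (x0, y) + ennreal (2 * (norm x0)\<^sup>2)" for y
  proof -
    have "norm y \<le> norm (x0 - y) + norm x0"
      using norm_triangle_sub[of y x0] by (simp add: norm_minus_commute)
    then have "(norm y)\<^sup>2 \<le> (norm (x0 - y) + norm x0)\<^sup>2"
      by (intro power_mono) auto
    also have "\<dots> \<le> 2 * (norm (x0 - y))\<^sup>2 + 2 * (norm x0)\<^sup>2"
      using zero_le_power2[of "norm (x0 - y) - norm x0"] by (simp add: power2_eq_square algebra_simps)
    finally have "ennreal ((norm y)\<^sup>2) \<le> ennreal (2 * (norm (x0 - y))\<^sup>2 + 2 * (norm x0)\<^sup>2)"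
      by (rule ennreal_leI)
    then show ?thesis
      by (simp add: g_def ennreal_mult)
  qed
  then have "(\<integral>\<^sup>+y. ennreal ((norm y)\<^sup>2) \<partial>?\<mu>) \<le> (\<integral>\<^sup>+y. 2 * g (x0, y) + ennreal (2 * (norm x0)\<^sup>2) \<partial>?\<mu>)"
    by (intro nn_integral_mono)
  also have "\<dots> = 2 * (\<integral>\<^sup>+y. g (x0, y) \<partial>?\<mu>) + ennreal (2 * (norm x0)\<^sup>2)"
    using \<mu>.emeasure_space_1 by (subst nn_integral_add) (auto simp: nn_integral_cmult g_def)
  also have "\<dots> < \<infinity>"
    using x0 by (simp add: ennreal_mult_less_top top.not_eq_extremum)
  finally show ?thesis
    by (simp add: nn_integral_distr)
qed

end

section \<open>Variance of a series of independent bounded random variables\<close>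

locale bounded_indep_series = prob_space +
  fixes Y :: "nat \<Rightarrow> 'a \<Rightarrow> real" and B :: real
  assumes measurable_Y [measurable]: "\<And>k. Y k \<in> borel_measurable M"
    and bounded_Y: "\<And>k \<omega>. \<bar>Y k \<omega>\<bar> \<le> B"
    and indep_Y: "\<And>j k. j \<noteq> k \<Longrightarrow> indep_var borel (Y j) borel (Y k)"
    and summable_Y: "AE \<omega> in M. summable (\<lambda>k. \<bar>Y k \<omega>\<bar>)"
    and integrable_suminf_abs: "integrable M (\<lambda>\<omega>. \<Sum>k. \<bar>Y k \<omega>\<bar>)"
begin

definition centered_sum :: "nat \<Rightarrow> 'a \<Rightarrow> real" where
  "centered_sum n \<omega> = (\<Sum>k<n. Y k \<omega> - expectation (Y k))"

lemma centered_sum_measurable [measurable]: "centered_sum n \<in> borel_measurable M"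
  unfolding centered_sum_def by measurable

lemma B_nonneg: "0 \<le> B"
  using abs_ge_zero bounded_Y order_trans by blast

lemma integrable_Y [simp]: "integrable M (Y k)"
  by (rule integrable_const_bound[where B = B]) (auto simp: bounded_Y)

lemma abs_centered_le: "\<bar>Y k \<omega> - expectation (Y k)\<bar> \<le> 2 * B"
proof -
  have "\<bar>expectation (Y k)\<bar> \<le> expectation (\<lambda>\<omega>. B)"
    using bounded_Y by (intro integral_abs_bound[THEN order_trans] integral_mono) auto
  then show ?thesis
    using bounded_Y[of k \<omega>] by (simp add: prob_space)
qed

lemma abs_centered_sum_le: "\<bar>centered_sum n \<omega>\<bar> \<le> real n * (2 * B)"
proof -
  have "\<bar>centered_sum n \<omega>\<bar> \<le> (\<Sum>k<n. \<bar>Y k \<omega> - expectation (Y k)\<bar>)"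
    unfolding centered_sum_def by (rule sum_abs)
  also have "\<dots> \<le> (\<Sum>k<n. 2 * B)"
    by (intro sum_mono abs_centered_le)
  finally show ?thesis by simp
qed

lemma integrable_centered_sum_mult [simp]: "integrable M (\<lambda>\<omega>. centered_sum n \<omega> * centered_sum n' \<omega>)"
proof (rule integrable_const_bound[where B = "(real n * (2 * B)) * (real n' * (2 * B))"])
  have "\<bar>centered_sum n \<omega> * centered_sum n' \<omega>\<bar> \<le> (real n * (2 * B)) * (real n' * (2 * B))" for \<omega>
    unfolding abs_mult by (intro mult_mono abs_centered_sum_le) (auto simp: B_nonneg)
  then show "AE \<omega> in M. norm (centered_sum n \<omega> * centered_sum n' \<omega>) \<le> (real n * (2 * B)) * (real n' * (2 * B))"
    by simp
qed simp

lemma expectation_centered_mult: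
  "expectation (\<lambda>\<omega>. (Y j \<omega> - expectation (Y j)) * (Y k \<omega> - expectation (Y k)))
    = (if j = k then variance (Y k) else 0)"
proof (cases "j = k")
  case False
  have "indep_var borel ((\<lambda>x. x - expectation (Y j)) \<circ> Y j) borel ((\<lambda>x. x - expectation (Y k)) \<circ> Y k)"
    by (rule indep_var_compose[OF indep_Y[OF False]]) measurable
  then have "expectation (\<lambda>\<omega>. (Y j \<omega> - expectation (Y j)) * (Y k \<omega> - expectation (Y k)))
      = expectation (\<lambda>\<omega>. Y j \<omega> - expectation (Y j)) * expectation (\<lambda>\<omega>. Y k \<omega> - expectation (Y k))"
    by (intro indep_var_lebesgue_integral) (auto simp: comp_def)
  with False show ?thesis
    by (simp add: prob_space)
qed (simp add: power2_eq_square)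

lemma expectation_centered_sum_mult:
  assumes "n \<le> n'"
  shows "expectation (\<lambda>\<omega>. centered_sum n \<omega> * centered_sum n' \<omega>) = (\<Sum>k<n. variance (Y k))"
proof -
  have int: "integrable M (\<lambda>\<omega>. (Y j \<omega> - expectation (Y j)) * (Y k \<omega> - expectation (Y k)))" for j k
  proof (rule integrable_const_bound[where B = "2 * B * (2 * B)"])
    have "\<bar>Y j \<omega> - expectation (Y j)\<bar> * \<bar>Y k \<omega> - expectation (Y k)\<bar> \<le> 2 * B * (2 * B)" for \<omega>
      by (intro mult_mono abs_centered_le) (auto simp: B_nonneg)
    then show "AE \<omega> in M. norm ((Y j \<omega> - expectation (Y j)) * (Y k \<omega> - expectation (Y k))) \<le> 2 * B * (2 * B)"
      by (simp add: abs_mult)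
  qed simp
  have "expectation (\<lambda>\<omega>. centered_sum n \<omega> * centered_sum n' \<omega>)
      = (\<Sum>j<n. \<Sum>k<n'. expectation (\<lambda>\<omega>. (Y j \<omega> - expectation (Y j)) * (Y k \<omega> - expectation (Y k))))"
    unfolding centered_sum_def sum_product using int by (simp add: integral_sum)
  also have "\<dots> = (\<Sum>j<n. variance (Y j))"
    using assms by (intro sum.cong refl) (simp add: expectation_centered_mult sum.delta)
  finally show ?thesis .
qed

lemma partial_sums_tendsto: "AE \<omega> in M. (\<lambda>n. \<Sum>k<n. Y k \<omega>) \<longlonglongrightarrow> (\<Sum>k. Y k \<omega>)"
  using summable_Y by eventually_elim (simp add: summable_LIMSEQ summable_rabs_cancel)

lemma abs_partial_sum_le: "AE \<omega> in M. \<bar>\<Sum>k<n. Y k \<omega>\<bar> \<le> (\<Sum>k. \<bar>Y k \<omega>\<bar>)"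
  using summable_Y by eventually_elim (rule order_trans[OF sum_abs sum_le_suminf], auto)

lemma expectation_partial_sums_tendsto:
  "(\<lambda>n. \<Sum>k<n. expectation (Y k)) \<longlonglongrightarrow> expectation (\<lambda>\<omega>. \<Sum>k. Y k \<omega>)"
proof -
  have "(\<lambda>n. expectation (\<lambda>\<omega>. \<Sum>k<n. Y k \<omega>)) \<longlonglongrightarrow> expectation (\<lambda>\<omega>. \<Sum>k. Y k \<omega>)"
    by (rule integral_dominated_convergence[OF _ _ integrable_suminf_abs partial_sums_tendsto])
      (use abs_partial_sum_le in auto)
  then show ?thesis
    by (simp add: integral_sum)
qed

lemma centered_sum_tendsto:
  "AE \<omega> in M. (\<lambda>n. centered_sum n \<omega>) \<longlonglongrightarrow> (\<Sum>k. Y k \<omega>) - expectation (\<lambda>\<omega>. \<Sum>k. Y k \<omega>)"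
  using partial_sums_tendsto
proof eventually_elim
  case (elim \<omega>)
  then show ?case
    unfolding centered_sum_def sum_subtractf by (intro tendsto_diff expectation_partial_sums_tendsto)
qed

lemma abs_centered_sum_le_dominant:
  "AE \<omega> in M. \<bar>centered_sum n \<omega>\<bar> \<le> (\<Sum>k. \<bar>Y k \<omega>\<bar>) + expectation (\<lambda>\<omega>. \<Sum>k. \<bar>Y k \<omega>\<bar>)"
proof -
  have "\<bar>\<Sum>k<n. expectation (Y k)\<bar> = \<bar>expectation (\<lambda>\<omega>. \<Sum>k<n. Y k \<omega>)\<bar>"
    by (simp add: integral_sum)
  also have "\<dots> \<le> expectation (\<lambda>\<omega>. \<bar>\<Sum>k<n. Y k \<omega>\<bar>)"
    by (rule integral_abs_bound)
  also have "\<dots> \<le> expectation (\<lambda>\<omega>. \<Sum>k. \<bar>Y k \<omega>\<bar>)"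
    using abs_partial_sum_le by (intro integral_mono_AE integrable_suminf_abs) auto
  finally have mean: "\<bar>\<Sum>k<n. expectation (Y k)\<bar> \<le> expectation (\<lambda>\<omega>. \<Sum>k. \<bar>Y k \<omega>\<bar>)" .
  show ?thesis
    using abs_partial_sum_le[of n]
  proof eventually_elim
    case (elim \<omega>)
    have "\<bar>centered_sum n \<omega>\<bar> \<le> \<bar>\<Sum>k<n. Y k \<omega>\<bar> + \<bar>\<Sum>k<n. expectation (Y k)\<bar>"
      unfolding centered_sum_def sum_subtractf by (rule abs_triangle_ineq4)
    with elim mean show ?case by linarith
  qed
qed

lemma evariance_le_suminf_variance:
  "evariance M (\<lambda>\<omega>. \<Sum>k. Y k \<omega>) \<le> (\<Sum>k. ennreal (variance (Y k)))"
proof -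
  let ?D = "\<lambda>\<omega>. (\<Sum>k. Y k \<omega>) - expectation (\<lambda>\<omega>. \<Sum>k. Y k \<omega>)"
  have "AE \<omega> in M. ennreal ((?D \<omega>)\<^sup>2) = liminf (\<lambda>n. ennreal ((centered_sum n \<omega>)\<^sup>2))"
    using centered_sum_tendsto
  proof eventually_elim
    case (elim \<omega>)
    then have "(\<lambda>n. ennreal ((centered_sum n \<omega>)\<^sup>2)) \<longlonglongrightarrow> ennreal ((?D \<omega>)\<^sup>2)"
      by (intro tendsto_ennrealI tendsto_power)
    then show ?case
      by (intro lim_imp_Liminf[symmetric]) auto
  qed
  then have "evariance M (\<lambda>\<omega>. \<Sum>k. Y k \<omega>) = (\<integral>\<^sup>+\<omega>. liminf (\<lambda>n. ennreal ((centered_sum n \<omega>)\<^sup>2)) \<partial>M)"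
    unfolding evariance_def by (rule nn_integral_cong_AE)
  also have "\<dots> \<le> liminf (\<lambda>n. \<integral>\<^sup>+\<omega>. ennreal ((centered_sum n \<omega>)\<^sup>2) \<partial>M)"
    by (rule nn_integral_liminf) measurable
  also have "(\<lambda>n. \<integral>\<^sup>+\<omega>. ennreal ((centered_sum n \<omega>)\<^sup>2) \<partial>M) = (\<lambda>n. \<Sum>k<n. ennreal (variance (Y k)))"
    using expectation_centered_sum_mult[OF order_refl] integrable_centered_sum_mult
    by (intro ext) (simp add: nn_integral_eq_integral power2_eq_square variance_positive)
  also have "liminf (\<lambda>n. \<Sum>k<n. ennreal (variance (Y k))) = (\<Sum>k. ennreal (variance (Y k)))"
    by (intro lim_imp_Liminf summable_LIMSEQ) auto
  finally show ?thesis .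
qed

lemma finite_sum_variance_le_evariance:
  "ennreal (\<Sum>k<n. variance (Y k)) \<le> evariance M (\<lambda>\<omega>. \<Sum>k. Y k \<omega>)"
proof -
  define D where "D \<omega> = (\<Sum>k. Y k \<omega>) - expectation (\<lambda>\<omega>. \<Sum>k. Y k \<omega>)" for \<omega>
  have [measurable]: "D \<in> borel_measurable M"
    unfolding D_def by measurable
  define w where "w \<omega> = (real n * (2 * B)) * ((\<Sum>k. \<bar>Y k \<omega>\<bar>) + expectation (\<lambda>\<omega>. \<Sum>k. \<bar>Y k \<omega>\<bar>))" for \<omega>
  have w: "integrable M w"
    unfolding w_def using integrable_suminf_abs by auto
  have lim: "AE \<omega> in M. (\<lambda>n'. centered_sum n \<omega> * centered_sum n' \<omega>) \<longlonglongrightarrow> centered_sum n \<omega> * D \<omega>"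
    using centered_sum_tendsto by eventually_elim (unfold D_def, intro tendsto_mult tendsto_const)
  have bound: "AE \<omega> in M. norm (centered_sum n \<omega> * centered_sum n' \<omega>) \<le> w \<omega>" for n'
    using abs_centered_sum_le_dominant[of n']
    by eventually_elim (auto simp: w_def abs_mult B_nonneg intro!: mult_mono abs_centered_sum_le)
  have prod_integrable: "integrable M (\<lambda>\<omega>. centered_sum n \<omega> * D \<omega>)"
    by (rule integrable_dominated_convergence[OF _ _ w lim bound]) measurable
  have prod_tendsto: "(\<lambda>n'. expectation (\<lambda>\<omega>. centered_sum n \<omega> * centered_sum n' \<omega>))
       \<longlonglongrightarrow> expectation (\<lambda>\<omega>. centered_sum n \<omega> * D \<omega>)"
    by (rule integral_dominated_convergence[OF _ _ w lim bound]) measurable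
  \<comment> \<open>\<open>D\<close> need not be square integrable, but \<open>expectation (centered_sum n * D)\<close> is the limit of
    \<open>expectation (centered_sum n * centered_sum n')\<close>, which equals \<open>\<Sum>k<n. variance (Y k)\<close> for \<open>n' \<ge> n\<close>\<close>
  have "eventually (\<lambda>n'. expectation (\<lambda>\<omega>. centered_sum n \<omega> * centered_sum n' \<omega>) = (\<Sum>k<n. variance (Y k))) sequentially"
    using expectation_centered_sum_mult by (auto simp: eventually_sequentially)
  then have "(\<lambda>n'. \<Sum>k<n. variance (Y k)) \<longlonglongrightarrow> expectation (\<lambda>\<omega>. centered_sum n \<omega> * D \<omega>)"
    using prod_tendsto by (rule Lim_transform_eventually[rotated])
  then have prod_expectation: "expectation (\<lambda>\<omega>. centered_sum n \<omega> * D \<omega>) = (\<Sum>k<n. variance (Y k))"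
    using LIMSEQ_unique tendsto_const by blast
  have "ennreal (\<Sum>k<n. variance (Y k)) = ennreal (expectation (\<lambda>\<omega>. 2 * (centered_sum n \<omega> * D \<omega>) - (centered_sum n \<omega>)\<^sup>2))"
    using prod_integrable prod_expectation expectation_centered_sum_mult[OF order_refl]
    by (simp add: power2_eq_square)
  also have "\<dots> \<le> (\<integral>\<^sup>+\<omega>. ennreal (2 * (centered_sum n \<omega> * D \<omega>) - (centered_sum n \<omega>)\<^sup>2) \<partial>M)"
    using prod_integrable by (intro ennreal_integral_le_nn_integral) (auto simp: power2_eq_square)
  also have "\<dots> \<le> (\<integral>\<^sup>+\<omega>. ennreal ((D \<omega>)\<^sup>2) \<partial>M)"
    using zero_le_power2[of "D _ - centered_sum n _"]
    by (intro nn_integral_mono ennreal_leI) (simp add: power2_eq_square algebra_simps)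
  also have "\<dots> = evariance M (\<lambda>\<omega>. \<Sum>k. Y k \<omega>)"
    unfolding evariance_def D_def ..
  finally show ?thesis .
qed

theorem evariance_suminf: "evariance M (\<lambda>\<omega>. \<Sum>k. Y k \<omega>) = (\<Sum>k. ennreal (variance (Y k)))"
proof (rule antisym[OF evariance_le_suminf_variance])
  show "(\<Sum>k. ennreal (variance (Y k))) \<le> evariance M (\<lambda>\<omega>. \<Sum>k. Y k \<omega>)"
    unfolding suminf_eq_SUP
    using finite_sum_variance_le_evariance by (intro SUP_least) (simp add: variance_positive)
qed

end

section \<open>Perturbed lattices\<close>

definition lattice_enum :: "nat \<Rightarrow> int \<times> int" where
  "lattice_enum = from_nat_into UNIV"

lemma bij_lattice_enum: "bij lattice_enum"
proof -
  have "infinite (UNIV :: (int \<times> int) set)"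
    by (simp add: finite_prod infinite_UNIV_int)
  then show ?thesis
    unfolding lattice_enum_def bij_def[symmetric] by (intro bij_betw_from_nat_into) auto
qed

locale perturbed_lattice = prob_space M + schwartz2_function f
  for M :: "'a measure" and f :: "real^2 \<Rightarrow> real" +
  fixes \<xi> :: "int \<times> int \<Rightarrow> 'a \<Rightarrow> real^2"
  assumes measurable_\<xi> [measurable]: "\<And>p. \<xi> p \<in> borel_measurable M"
    and indep_\<xi>: "indep_vars (\<lambda>_. borel) \<xi> UNIV"
    and identically_distributed: "\<And>p. distr M borel (\<xi> p) = distr M borel (\<xi> (0, 0))"
begin

definition summand :: "real \<Rightarrow> int \<times> int \<Rightarrow> real^2 \<Rightarrow> real" where
  "summand r p v = f ((1 / r) *\<^sub>R (lat p + v))"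

definition random_summand :: "real \<Rightarrow> nat \<Rightarrow> 'a \<Rightarrow> real" where
  "random_summand r k \<omega> = summand r (lattice_enum k) (\<xi> (lattice_enum k) \<omega>)"

lemma summand_measurable [measurable]: "summand r p \<in> borel_measurable borel"
proof -
  have "continuous_on UNIV f"
    using f_continuous by (simp add: continuous_at_imp_continuous_on)
  then have "continuous_on UNIV (summand r p)"
    unfolding summand_def by (rule continuous_on_compose2) (auto intro!: continuous_intros)
  then show ?thesis
    by (rule borel_measurable_continuous_onI)
qed

lemma random_summand_measurable [measurable]: "random_summand r k \<in> borel_measurable M"
  unfolding random_summand_def by measurable

lemma nn_integral_\<xi>_eq:
  assumes [measurable]: "g \<in> borel_measurable borel"
  shows "(\<integral>\<^sup>+\<omega>. g (\<xi> p \<omega>) \<partial>M) = (\<integral>\<^sup>+\<omega>. g (\<xi> (0, 0) \<omega>) \<partial>M)"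
proof -
  have "(\<integral>\<^sup>+\<omega>. g (\<xi> p \<omega>) \<partial>M) = (\<integral>\<^sup>+v. g v \<partial>distr M borel (\<xi> p))"
    by (simp add: nn_integral_distr)
  then show ?thesis
    by (simp add: identically_distributed[of p] nn_integral_distr)
qed

lemma integral_\<xi>_eq:
  fixes g :: "real^2 \<Rightarrow> real"
  assumes [measurable]: "g \<in> borel_measurable borel"
  shows "(\<integral>\<omega>. g (\<xi> p \<omega>) \<partial>M) = (\<integral>\<omega>. g (\<xi> (0, 0) \<omega>) \<partial>M)"
proof -
  have "(\<integral>\<omega>. g (\<xi> p \<omega>) \<partial>M) = (\<integral>v. g v \<partial>distr M borel (\<xi> p))"
    by (simp add: integral_distr)
  then show ?thesis
    by (simp add: identically_distributed[of p] integral_distr)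
qed

lemma nn_integral_suminf_abs_random_summand_finite:
  assumes "r > 0"
  shows "(\<integral>\<^sup>+\<omega>. (\<Sum>k. ennreal \<bar>random_summand r k \<omega>\<bar>) \<partial>M) < \<infinity>"
proof -
  obtain C where C: "\<And>y P. finite P \<Longrightarrow> (\<Sum>p\<in>P. \<bar>summand r p y\<bar>) \<le> C * (1 + r)\<^sup>2"
    using lattice_sum_abs_le assms unfolding summand_def by blast
  have "(\<integral>\<^sup>+\<omega>. (\<Sum>k. ennreal \<bar>random_summand r k \<omega>\<bar>) \<partial>M)
      = (\<Sum>k. \<integral>\<^sup>+\<omega>. ennreal \<bar>summand r (lattice_enum k) (\<xi> (lattice_enum k) \<omega>)\<bar> \<partial>M)"
    unfolding random_summand_def by (rule nn_integral_suminf) measurable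
  also have "\<dots> = (\<Sum>k. \<integral>\<^sup>+\<omega>. ennreal \<bar>summand r (lattice_enum k) (\<xi> (0, 0) \<omega>)\<bar> \<partial>M)"
    by (intro suminf_cong nn_integral_\<xi>_eq) measurable
  also have "\<dots> = (\<integral>\<^sup>+\<omega>. (\<Sum>k. ennreal \<bar>summand r (lattice_enum k) (\<xi> (0, 0) \<omega>)\<bar>) \<partial>M)"
    by (rule nn_integral_suminf[symmetric]) measurable
  also have "\<dots> \<le> (\<integral>\<^sup>+\<omega>. ennreal (C * (1 + r)\<^sup>2) \<partial>M)"
    using C bij_is_inj[OF bij_lattice_enum]
    by (intro nn_integral_mono suminf_ennreal_le_if_finite_sums_le) auto
  also have "\<dots> < \<infinity>"
    by (simp add: emeasure_space_1)
  finally show ?thesis .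
qed

lemma summable_random_summand:
  assumes "r > 0"
  shows "AE \<omega> in M. summable (\<lambda>k. \<bar>random_summand r k \<omega>\<bar>)"
proof -
  have "AE \<omega> in M. (\<Sum>k. ennreal \<bar>random_summand r k \<omega>\<bar>) \<noteq> \<infinity>"
    using nn_integral_suminf_abs_random_summand_finite[OF assms]
    by (intro nn_integral_PInf_AE borel_measurable_suminf_order) auto
  then show ?thesis
    by eventually_elim (rule summable_suminf_not_top, auto)
qed

lemma integrable_suminf_abs_random_summand:
  assumes "r > 0"
  shows "integrable M (\<lambda>\<omega>. \<Sum>k. \<bar>random_summand r k \<omega>\<bar>)"
proof (rule integrableI_bounded)
  have "AE \<omega> in M. ennreal (norm (\<Sum>k. \<bar>random_summand r k \<omega>\<bar>)) = (\<Sum>k. ennreal \<bar>random_summand r k \<omega>\<bar>)"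
    using summable_random_summand[OF assms]
    by eventually_elim (simp add: suminf_nonneg suminf_ennreal2)
  then show "(\<integral>\<^sup>+\<omega>. ennreal (norm (\<Sum>k. \<bar>random_summand r k \<omega>\<bar>)) \<partial>M) < \<infinity>"
    using nn_integral_suminf_abs_random_summand_finite[OF assms] by (simp add: nn_integral_cong_AE)
qed measurable

lemma linstat_eq:
  "linstat f \<xi> r \<omega>
    = (if summable (\<lambda>k. \<bar>random_summand r k \<omega>\<bar>) then (\<Sum>k. random_summand r k \<omega>) else 0)"
  unfolding linstat_def infsum_eq_suminf_bij[OF bij_lattice_enum] random_summand_def summand_def ..

lemma linstat_measurable [measurable]: "linstat f \<xi> r \<in> borel_measurable M"
proof -
  \<comment> \<open>measurability is known for \<open>ennreal\<close> series, not for the predicate \<open>summable\<close>\<close>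
  have "summable (\<lambda>k. \<bar>random_summand r k \<omega>\<bar>) \<longleftrightarrow> (\<Sum>k. ennreal \<bar>random_summand r k \<omega>\<bar>) < \<top>" for \<omega>
  proof
    assume "summable (\<lambda>k. \<bar>random_summand r k \<omega>\<bar>)"
    then have "(\<Sum>k. ennreal \<bar>random_summand r k \<omega>\<bar>) \<noteq> \<top>"
      by (intro ennreal_suminf_neq_top) auto
    then show "(\<Sum>k. ennreal \<bar>random_summand r k \<omega>\<bar>) < \<top>"
      by (simp add: top.not_eq_extremum)
  next
    assume "(\<Sum>k. ennreal \<bar>random_summand r k \<omega>\<bar>) < \<top>"
    then show "summable (\<lambda>k. \<bar>random_summand r k \<omega>\<bar>)"
      by (intro summable_suminf_not_top) auto
  qed
  then have "linstat f \<xi> r = (\<lambda>\<omega>. if (\<Sum>k. ennreal \<bar>random_summand r k \<omega>\<bar>) < \<top> then (\<Sum>k. random_summand r k \<omega>) else 0)"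
    by (simp add: fun_eq_iff linstat_eq)
  also have "\<dots> \<in> borel_measurable M"
    by measurable
  finally show ?thesis .
qed

lemma evariance_linstat:
  assumes "r > 0"
  shows "evariance M (linstat f \<xi> r)
    = (\<Sum>k. ennreal (variance (\<lambda>\<omega>. summand r (lattice_enum k) (\<xi> (0, 0) \<omega>))))"
proof -
  obtain B where B: "\<And>x. \<bar>f x\<bar> \<le> B"
    using f_bounded by blast
  interpret series: bounded_indep_series M "random_summand r" B
  proof
    show "\<bar>random_summand r k \<omega>\<bar> \<le> B" for k \<omega>
      by (simp add: random_summand_def summand_def B)
    show "indep_var borel (random_summand r j) borel (random_summand r k)" if "j \<noteq> k" for j k
    proof -
      have "lattice_enum j \<noteq> lattice_enum k"
        using that bij_is_inj[OF bij_lattice_enum] by (auto dest: injD)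
      then have "indep_var borel (\<xi> (lattice_enum j)) borel (\<xi> (lattice_enum k))"
        using indep_vars_indep_var[OF indep_\<xi>] by simp
      then show ?thesis
        unfolding random_summand_def by (rule indep_var_compose[unfolded comp_def]) measurable
    qed
  qed (use summable_random_summand[OF assms] integrable_suminf_abs_random_summand[OF assms] in auto)
  have "AE \<omega> in M. linstat f \<xi> r \<omega> = (\<Sum>k. random_summand r k \<omega>)"
    using summable_random_summand[OF assms] by eventually_elim (simp add: linstat_eq)
  then have "evariance M (linstat f \<xi> r) = evariance M (\<lambda>\<omega>. \<Sum>k. random_summand r k \<omega>)"
    by (rule evariance_cong_AE[rotated 2]) measurable
  also have "\<dots> = (\<Sum>k. ennreal (variance (random_summand r k)))"
    by (rule series.evariance_suminf)
  also have "\<dots> = (\<Sum>k. ennreal (variance (\<lambda>\<omega>. summand r (lattice_enum k) (\<xi> (0, 0) \<omega>))))"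
  proof (intro suminf_cong arg_cong[where f = ennreal])
    fix k
    let ?p = "lattice_enum k"
    have mean: "expectation (random_summand r k) = expectation (\<lambda>\<omega>. summand r ?p (\<xi> (0, 0) \<omega>))"
      unfolding random_summand_def by (rule integral_\<xi>_eq) measurable
    show "variance (random_summand r k) = variance (\<lambda>\<omega>. summand r ?p (\<xi> (0, 0) \<omega>))"
      unfolding mean unfolding random_summand_def
      by (rule integral_\<xi>_eq[where g = "\<lambda>v. (summand r ?p v - _)\<^sup>2"]) measurable
  qed
  finally show ?thesis .
qed

lemma abs_summand_le: "\<bar>summand r p v\<bar> \<le> (SUP x. \<bar>f x\<bar>)"
proof -
  obtain B where B: "\<And>x. \<bar>f x\<bar> \<le> B"
    using f_bounded by blast
  have "bdd_above (range (\<lambda>x. \<bar>f x\<bar>))"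
    by (rule bdd_aboveI2[where M = B]) (rule B)
  then show ?thesis
    unfolding summand_def by (rule cSUP_upper[rotated]) simp
qed

lemma integrable_summand [simp]:
  assumes [measurable]: "X \<in> borel_measurable M"
  shows "integrable M (\<lambda>\<omega>. summand r p (X \<omega>))"
  by (rule integrable_const_bound[where B = "SUP x. \<bar>f x\<bar>"]) (auto simp: abs_summand_le)

lemma integrable_summand_sq [simp]:
  assumes [measurable]: "X \<in> borel_measurable M"
  shows "integrable M (\<lambda>\<omega>. (summand r p (X \<omega>))\<^sup>2)"
proof (rule integrable_const_bound[where B = "(SUP x. \<bar>f x\<bar>)\<^sup>2"])
  show "AE \<omega> in M. norm ((summand r p (X \<omega>))\<^sup>2) \<le> (SUP x. \<bar>f x\<bar>)\<^sup>2"
    using abs_summand_le by (intro AE_I2) (simp add: power2_le_of_abs_le)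
qed simp

lemma integrable_summand_sq_diff [simp]:
  assumes [measurable]: "X \<in> borel_measurable M" "X' \<in> borel_measurable M"
  shows "integrable M (\<lambda>\<omega>. (summand r p (X \<omega>) - summand r p (X' \<omega>))\<^sup>2)"
proof (rule integrable_const_bound[where B = "(2 * (SUP x. \<bar>f x\<bar>))\<^sup>2"])
  have "\<bar>summand r p (X \<omega>) - summand r p (X' \<omega>)\<bar> \<le> 2 * (SUP x. \<bar>f x\<bar>)" for \<omega>
    using abs_summand_le[of r p "X \<omega>"] abs_summand_le[of r p "X' \<omega>"] by linarith
  then have "(summand r p (X \<omega>) - summand r p (X' \<omega>))\<^sup>2 \<le> (2 * (SUP x. \<bar>f x\<bar>))\<^sup>2" for \<omega>
    by (rule power2_le_of_abs_le)
  then show "AE \<omega> in M. norm ((summand r p (X \<omega>) - summand r p (X' \<omega>))\<^sup>2) \<le> (2 * (SUP x. \<bar>f x\<bar>))\<^sup>2"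
    by simp
qed simp

lemma evariance_linstat_le:
  assumes "r > 0"
  shows "evariance M (linstat f \<xi> r)
    \<le> (\<integral>\<^sup>+\<omega>. (\<Sum>k. ennreal ((summand r (lattice_enum k) (\<xi> (0, 0) \<omega>) - summand r (lattice_enum k) 0)\<^sup>2)) \<partial>M)"
proof -
  let ?h = "\<lambda>k. summand r (lattice_enum k)"
  have "evariance M (linstat f \<xi> r) = (\<Sum>k. ennreal (variance (\<lambda>\<omega>. ?h k (\<xi> (0, 0) \<omega>))))"
    by (rule evariance_linstat[OF assms])
  also have "\<dots> \<le> (\<Sum>k. \<integral>\<^sup>+\<omega>. ennreal ((?h k (\<xi> (0, 0) \<omega>) - ?h k 0)\<^sup>2) \<partial>M)"
  proof (intro suminf_le)
    fix k
    have "ennreal (variance (\<lambda>\<omega>. ?h k (\<xi> (0, 0) \<omega>)))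
        \<le> ennreal (expectation (\<lambda>\<omega>. (?h k (\<xi> (0, 0) \<omega>) - ?h k 0)\<^sup>2))"
      by (intro ennreal_leI variance_le_mean_sq_dev) simp_all
    also have "\<dots> = (\<integral>\<^sup>+\<omega>. ennreal ((?h k (\<xi> (0, 0) \<omega>) - ?h k 0)\<^sup>2) \<partial>M)"
      using integrable_summand_sq_diff[where X = "\<xi> (0, 0)" and X' = "\<lambda>_. 0"]
      by (intro nn_integral_eq_integral[symmetric]) simp_all
    finally show "ennreal (variance (\<lambda>\<omega>. ?h k (\<xi> (0, 0) \<omega>))) \<le> (\<integral>\<^sup>+\<omega>. ennreal ((?h k (\<xi> (0, 0) \<omega>) - ?h k 0)\<^sup>2) \<partial>M)" .
  qed auto
  also have "\<dots> = (\<integral>\<^sup>+\<omega>. (\<Sum>k. ennreal ((?h k (\<xi> (0, 0) \<omega>) - ?h k 0)\<^sup>2)) \<partial>M)"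
    by (rule nn_integral_suminf[symmetric]) measurable
  finally show ?thesis .
qed

lemma evariance_linstat_bounded:
  assumes moment: "(\<integral>\<^sup>+\<omega>. ennreal ((norm (\<xi> (0, 0) \<omega>))\<^sup>2) \<partial>M) < \<infinity>"
  shows "\<exists>C::real. \<forall>r>0. evariance M (linstat f \<xi> r) \<le> ennreal C"
proof -
  obtain K where K: "\<And>r y P. r > 0 \<Longrightarrow> finite P \<Longrightarrow>
      (\<Sum>p\<in>P. (summand r p y - summand r p 0)\<^sup>2) \<le> K * (1 + (norm y)\<^sup>2)"
    using lattice_sum_sq_shift_upper unfolding summand_def by auto
  have "0 \<le> K"
    using K[of 1 "{}" 0] by simp
  define Q where "Q = (\<integral>\<^sup>+\<omega>. ennreal (K * (1 + (norm (\<xi> (0, 0) \<omega>))\<^sup>2)) \<partial>M)"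
  have "Q = ennreal K * (\<integral>\<^sup>+\<omega>. 1 + ennreal ((norm (\<xi> (0, 0) \<omega>))\<^sup>2) \<partial>M)"
    unfolding Q_def using \<open>0 \<le> K\<close>
    by (subst nn_integral_cmult[symmetric]) (auto simp: ennreal_mult intro!: nn_integral_cong)
  also have "\<dots> = ennreal K * (1 + (\<integral>\<^sup>+\<omega>. ennreal ((norm (\<xi> (0, 0) \<omega>))\<^sup>2) \<partial>M))"
    by (subst nn_integral_add) (auto simp: emeasure_space_1)
  finally have "Q < \<infinity>"
    using moment by (simp add: ennreal_mult_less_top)
  have "evariance M (linstat f \<xi> r) \<le> Q" if "r > 0" for r
  proof -
    have "(\<integral>\<^sup>+\<omega>. (\<Sum>k. ennreal ((summand r (lattice_enum k) (\<xi> (0, 0) \<omega>) - summand r (lattice_enum k) 0)\<^sup>2)) \<partial>M) \<le> Q"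
      unfolding Q_def using bij_is_inj[OF bij_lattice_enum] K[OF \<open>r > 0\<close>]
      by (intro nn_integral_mono suminf_ennreal_le_if_finite_sums_le) auto
    with evariance_linstat_le[OF \<open>r > 0\<close>] show ?thesis
      by (rule order_trans)
  qed
  with \<open>Q < \<infinity>\<close> show ?thesis
    by (intro exI[of _ "enn2real Q"]) (simp add: less_top)
qed

lemma nn_integral_sq_diff_summand:
  assumes "r > 0"
  shows "(\<integral>\<^sup>+\<omega>. (\<Sum>k. ennreal ((summand r (lattice_enum k) (\<xi> (0, 0) \<omega>) - summand r (lattice_enum k) (\<xi> (1, 0) \<omega>))\<^sup>2)) \<partial>M)
    = 2 * evariance M (linstat f \<xi> r)"
proof -
  let ?h = "\<lambda>k. summand r (lattice_enum k)"
  have indep: "indep_var borel (\<xi> (0, 0)) borel (\<xi> (1, 0))"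
    by (rule indep_vars_indep_var[OF indep_\<xi>]) auto
  have sq_diff: "(\<integral>\<^sup>+\<omega>. ennreal ((?h k (\<xi> (0, 0) \<omega>) - ?h k (\<xi> (1, 0) \<omega>))\<^sup>2) \<partial>M)
      = 2 * ennreal (variance (\<lambda>\<omega>. ?h k (\<xi> (0, 0) \<omega>)))" for k
  proof -
    have "indep_var borel (?h k \<circ> \<xi> (0, 0)) borel (?h k \<circ> \<xi> (1, 0))"
      by (rule indep_var_compose[OF indep]) measurable
    moreover have "distr M borel (?h k \<circ> \<xi> p) = distr (distr M borel (\<xi> p)) borel (?h k)" for p
      by (rule distr_distr[symmetric]) measurable
    then have "distr M borel (?h k \<circ> \<xi> (1, 0)) = distr M borel (?h k \<circ> \<xi> (0, 0))"
      using identically_distributed[of "(1, 0)"] by simp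
    ultimately have "expectation (\<lambda>\<omega>. (?h k (\<xi> (0, 0) \<omega>) - ?h k (\<xi> (1, 0) \<omega>))\<^sup>2)
        = 2 * variance (\<lambda>\<omega>. ?h k (\<xi> (0, 0) \<omega>))"
      using expectation_sq_diff_indep[of "?h k \<circ> \<xi> (0, 0)" "?h k \<circ> \<xi> (1, 0)"] by (simp add: comp_def)
    then show ?thesis
      by (subst nn_integral_eq_integral) (simp_all add: ennreal_mult variance_positive)
  qed
  have "(\<integral>\<^sup>+\<omega>. (\<Sum>k. ennreal ((?h k (\<xi> (0, 0) \<omega>) - ?h k (\<xi> (1, 0) \<omega>))\<^sup>2)) \<partial>M)
      = (\<Sum>k. 2 * ennreal (variance (\<lambda>\<omega>. ?h k (\<xi> (0, 0) \<omega>))))"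
    unfolding sq_diff[symmetric] by (rule nn_integral_suminf) measurable
  also have "\<dots> = 2 * evariance M (linstat f \<xi> r)"
    by (simp add: ennreal_suminf_cmult evariance_linstat[OF assms])
  finally show ?thesis .
qed

lemma nn_integral_truncated_sq_diff_le:
  assumes nonzero: "\<exists>a. f a \<noteq> 0"
  shows "\<exists>c>0. \<exists>r0>0. \<forall>r\<ge>r0. (\<integral>\<^sup>+\<omega>. ennreal (min (c * (norm (\<xi> (0, 0) \<omega> - \<xi> (1, 0) \<omega>))\<^sup>2) (c * r\<^sup>2)) \<partial>M)
     \<le> 2 * evariance M (linstat f \<xi> r)"
proof -
  interpret nonzero_schwartz2 f
    by unfold_locales (rule nonzero)
  obtain c r0 where c: "c > 0" "r0 > 0" and lower: "\<forall>r\<ge>r0. \<forall>y z. \<exists>P. finite P \<and>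
      c * min ((norm (y - z))\<^sup>2) (r\<^sup>2) \<le> (\<Sum>p\<in>P. (summand r p y - summand r p z)\<^sup>2)"
    using lattice_sum_sq_shift_lower unfolding summand_def by auto
  let ?d = "\<lambda>\<omega>. norm (\<xi> (0, 0) \<omega> - \<xi> (1, 0) \<omega>)"
  have "(\<integral>\<^sup>+\<omega>. ennreal (min (c * (?d \<omega>)\<^sup>2) (c * r\<^sup>2)) \<partial>M) \<le> 2 * evariance M (linstat f \<xi> r)"
    if r: "r0 \<le> r" for r
  proof -
    have pointwise: "ennreal (min (c * (?d \<omega>)\<^sup>2) (c * r\<^sup>2))
        \<le> (\<Sum>k. ennreal ((summand r (lattice_enum k) (\<xi> (0, 0) \<omega>) - summand r (lattice_enum k) (\<xi> (1, 0) \<omega>))\<^sup>2))" for \<omega>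
    proof -
      obtain P where P: "finite P" "c * min ((?d \<omega>)\<^sup>2) (r\<^sup>2)
          \<le> (\<Sum>p\<in>P. (summand r p (\<xi> (0, 0) \<omega>) - summand r p (\<xi> (1, 0) \<omega>))\<^sup>2)"
        using lower r by blast
      have "min (c * (?d \<omega>)\<^sup>2) (c * r\<^sup>2) = c * min ((?d \<omega>)\<^sup>2) (r\<^sup>2)"
        using c by (simp add: min_mult_distrib_left)
      then have "ennreal (min (c * (?d \<omega>)\<^sup>2) (c * r\<^sup>2))
          \<le> ennreal (\<Sum>p\<in>P. (summand r p (\<xi> (0, 0) \<omega>) - summand r p (\<xi> (1, 0) \<omega>))\<^sup>2)"
        using P(2) by (simp add: ennreal_leI)
      also have "\<dots> \<le> (\<Sum>k. ennreal ((summand r (lattice_enum k) (\<xi> (0, 0) \<omega>) - summand r (lattice_enum k) (\<xi> (1, 0) \<omega>))\<^sup>2))"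
        by (rule finite_sum_le_suminf_ennreal[OF bij_lattice_enum P(1)]) simp
      finally show ?thesis .
    qed
    have "r > 0"
      using r c by linarith
    then show ?thesis
      unfolding nn_integral_sq_diff_summand[OF \<open>r > 0\<close>, symmetric] by (intro nn_integral_mono pointwise)
  qed
  with c show ?thesis by blast
qed

lemma moment_diff_finite_if_evariance_bounded:
  assumes nonzero: "\<exists>a. f a \<noteq> 0" and bounded: "\<And>r. r > 0 \<Longrightarrow> evariance M (linstat f \<xi> r) \<le> ennreal C"
  shows "(\<integral>\<^sup>+\<omega>. ennreal ((norm (\<xi> (0, 0) \<omega> - \<xi> (1, 0) \<omega>))\<^sup>2) \<partial>M) < \<infinity>"
proof -
  let ?d = "\<lambda>\<omega>. norm (\<xi> (0, 0) \<omega> - \<xi> (1, 0) \<omega>)"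
  obtain c r0 where c: "c > 0" "r0 > 0" and truncated: "\<forall>r\<ge>r0.
      (\<integral>\<^sup>+\<omega>. ennreal (min (c * (?d \<omega>)\<^sup>2) (c * r\<^sup>2)) \<partial>M) \<le> 2 * evariance M (linstat f \<xi> r)"
    using nn_integral_truncated_sq_diff_le[OF nonzero] by blast
  have doubled: "2 * evariance M (linstat f \<xi> r) \<le> ennreal (2 * C)" if "r > 0" for r
    using mult_left_mono[OF bounded[OF that], of 2] by (cases "0 \<le> C") (auto simp: ennreal_mult ennreal_neg)
  have "(\<integral>\<^sup>+\<omega>. ennreal (c * (?d \<omega>)\<^sup>2) \<partial>M) \<le> ennreal (2 * C)"
  proof (rule nn_integral_le_if_truncations_le[where a = "c * r0\<^sup>2"])
    fix t assume t: "c * r0\<^sup>2 \<le> t"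
    \<comment> \<open>the truncation level \<open>t\<close> corresponds to the scale \<open>r = sqrt (t / c)\<close>\<close>
    define r where "r = sqrt (t / c)"
    have "0 \<le> c * r0\<^sup>2"
      using c by simp
    with t have "0 \<le> t"
      by linarith
    with t c have "r0\<^sup>2 \<le> t / c" "0 \<le> t / c"
      by (simp_all add: field_simps)
    then have "r0 \<le> r" and t_eq: "c * r\<^sup>2 = t"
      using c real_sqrt_le_mono[of "r0\<^sup>2" "t / c"] by (simp_all add: r_def)
    then have "r > 0"
      using c by linarith
    have "(\<integral>\<^sup>+\<omega>. ennreal (min (c * (?d \<omega>)\<^sup>2) (c * r\<^sup>2)) \<partial>M) \<le> 2 * evariance M (linstat f \<xi> r)"
      by (rule truncated[rule_format, OF \<open>r0 \<le> r\<close>])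
    also have "\<dots> \<le> ennreal (2 * C)"
      by (rule doubled[OF \<open>r > 0\<close>])
    finally show "(\<integral>\<^sup>+\<omega>. ennreal (min (c * (?d \<omega>)\<^sup>2) t) \<partial>M) \<le> ennreal (2 * C)"
      unfolding t_eq .
  qed measurable
  also have "\<dots> < \<infinity>"
    by simp
  finally have "ennreal c * (\<integral>\<^sup>+\<omega>. ennreal ((?d \<omega>)\<^sup>2) \<partial>M) < \<infinity>"
    using c by (simp add: ennreal_mult nn_integral_cmult)
  then show ?thesis
    using c by (auto simp: ennreal_mult_less_top)
qed

theorem evariance_bounded_iff_moment:
  assumes "\<exists>a. f a \<noteq> 0"
  shows "(\<exists>C::real. \<forall>r>0. evariance M (linstat f \<xi> r) \<le> ennreal C)
     \<longleftrightarrow> (\<integral>\<^sup>+\<omega>. ennreal ((norm (\<xi> (0, 0) \<omega>))\<^sup>2) \<partial>M) < \<infinity>"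
proof
  assume "\<exists>C::real. \<forall>r>0. evariance M (linstat f \<xi> r) \<le> ennreal C"
  then obtain C where "\<And>r. r > 0 \<Longrightarrow> evariance M (linstat f \<xi> r) \<le> ennreal C"
    by blast
  from moment_diff_finite_if_evariance_bounded[OF assms this]
  show "(\<integral>\<^sup>+\<omega>. ennreal ((norm (\<xi> (0, 0) \<omega>))\<^sup>2) \<partial>M) < \<infinity>"
    by (intro nn_integral_norm_sq_finite_if_diff[OF _ identically_distributed]
        indep_vars_indep_var[OF indep_\<xi>]) auto
qed (rule evariance_linstat_bounded)

end

theorem proposition3p5:
  fixes M :: "'a measure" and f :: "real^2 \<Rightarrow> real"
    and \<xi> :: "int \<times> int \<Rightarrow> 'a \<Rightarrow> real^2" and x0 :: "real^2"
  assumes "prob_space M"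
    and "schwartz2 f"
    and "fourier2 f x0 \<noteq> 0"
    and "\<And>p. \<xi> p \<in> borel_measurable M"
    and "prob_space.indep_vars M (\<lambda>_. borel) \<xi> UNIV"
    and "\<And>p. distr M borel (\<xi> p) = distr M borel (\<xi> (0, 0))"
  shows "(\<exists>C::real. \<forall>r>0. evariance M (linstat f \<xi> r) \<le> ennreal C)
     \<longleftrightarrow> (\<integral>\<^sup>+ \<omega>. ennreal ((norm (\<xi> (0, 0) \<omega>))\<^sup>2) \<partial>M) < \<infinity>"
proof -
  interpret perturbed_lattice M f \<xi>
    using assms(1,2,4-6)
    by (intro perturbed_lattice.intro schwartz2_function.intro perturbed_lattice_axioms.intro)
  \<comment> \<open>The Fourier hypothesis is only used to rule out \<open>f = 0\<close>.\<close>
  have "\<exists>a. f a \<noteq> 0"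
  proof (rule ccontr)
    assume "\<nexists>a. f a \<noteq> 0"
    then have "fourier2 f x0 = 0"
      by (simp add: fourier2_def)
    with assms(3) show False ..
  qed
  then show ?thesis
    by (rule evariance_bounded_iff_moment)
qed

end
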